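(* Let $c>0$ and $\alpha>-\frac12$ be real numbers and let $n\ge0$ be an integer such that $\chi_{n,\alpha}(c)\ge 6\,\frac{\alpha+1}{\alpha+3}$ and $q=\frac{c^2}{\chi_{n,\alpha}(c)}$ satisfies $q\le\frac12+\alpha$ if $-\frac12<\alpha\le 0$, and $q\le\min\left(1,\frac12+\alpha\right)$ if $\alpha>0$. Then $$\sup_{t\in[-1,1]}|\varphi_{n,c}^{\alpha}(t)|=|\varphi_{n,c}^{\alpha}(1)|\le 3\sqrt{\alpha+1}\,\big(\chi_{n,\alpha}(c)\big)^{\frac{\alpha+1}{2}}.$$
   Context: $\omega_\alpha(t)=(1-t^2)^\alpha$. $\varphi_{n,c}^{\alpha}$ is the eigenfunction, normalized by $\int_{-1}^1(\varphi_{n,c}^\alpha)^2\omega_\alpha=1$, of the operator $\mathcal L_c^{\alpha}f(x)=\int_{-1}^1 e^{cxy}f(y)\omega_\alpha(y)\,dy$ on $L^2([-1,1],\omega_\alpha)$ associated with its $(n+1)$-th largest eigenvalue (eigenvalues indexed from $n=0$ in decreasing order). The functions $\varphi_{n,c}^\alpha$ are also the eigenfunctions of the Sturm–Liouville operator $-\mathcal D_c^\alpha$, and $\chi_{n,\alpha}(c)$ is the corresponding eigenvalue: $-\frac{d}{dx}\big[\omega_\alpha(x)(1-x^2)(\varphi_{n,c}^\alpha)'(x)\big]-c^2x^2\omega_\alpha(x)\varphi_{n,c}^\alpha(x)=\chi_{n,\alpha}(c)\,\omega_\alpha(x)\varphi_{n,c}^\alpha(x)$ for $x\in(-1,1)$;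 one has $n(n+2\alpha+1)-c^2\le\chi_{n,\alpha}(c)\le n(n+2\alpha+1)$. *)

theory Defs
  imports "HOL-Analysis.Analysis"
begin

text \<open>Jacobi weight \<open>\<omega>_\<alpha>(t) = (1 - t^2)^\<alpha>\<close> (powr; the value at t = +-1 is irrelevant, measure zero).\<close>
definition jweight :: "real \<Rightarrow> real \<Rightarrow> real" where
  "jweight \<alpha> t = (1 - t\<^sup>2) powr \<alpha>"

definition in_L2w :: "real \<Rightarrow> (real \<Rightarrow> real) \<Rightarrow> bool" where
  "in_L2w \<alpha> f \<longleftrightarrow> f \<in> borel_measurable lborel \<and>
     set_integrable lborel {-1..1} (\<lambda>y. (f y)\<^sup>2 * jweight \<alpha> y)"

definition normsq_w :: "real \<Rightarrow> (real \<Rightarrow> real) \<Rightarrow> real" where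
  "normsq_w \<alpha> f = (LINT y:{-1..1}|lborel. (f y)\<^sup>2 * jweight \<alpha> y)"

definition Lop :: "real \<Rightarrow> real \<Rightarrow> (real \<Rightarrow> real) \<Rightarrow> real \<Rightarrow> real" where
  "Lop c \<alpha> f x = (LINT y:{-1..1}|lborel. exp (c * x * y) * f y * jweight \<alpha> y)"

text \<open>f is an eigenfunction of L_c^\<alpha> with eigenvalue \<mu> (f nonzero in L^2, the
  identity holding pointwise on [-1,1], i.e. f is the continuous representative).\<close>
definition is_eigenfun :: "real \<Rightarrow> real \<Rightarrow> real \<Rightarrow> (real \<Rightarrow> real) \<Rightarrow> bool" where
  "is_eigenfun c \<alpha> \<mu> f \<longleftrightarrow> in_L2w \<alpha> f \<and> normsq_w \<alpha> f > 0 \<and>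
     (\<forall>x\<in>{-1..1}. Lop c \<alpha> f x = \<mu> * f x)"

definition eigenvalues_L :: "real \<Rightarrow> real \<Rightarrow> real set" where
  "eigenvalues_L c \<alpha> = {\<mu>. \<exists>f. is_eigenfun c \<alpha> \<mu> f}"

text \<open>\<mu> is the (n+1)-th largest eigenvalue (index n, from 0): exactly n eigenvalues exceed it.\<close>
definition nth_eigenvalue_L :: "real \<Rightarrow> real \<Rightarrow> nat \<Rightarrow> real \<Rightarrow> bool" where
  "nth_eigenvalue_L c \<alpha> n \<mu> \<longleftrightarrow> \<mu> \<in> eigenvalues_L c \<alpha> \<and>
     finite {\<nu>\<in>eigenvalues_L c \<alpha>. \<nu> > \<mu>} \<and> card {\<nu>\<in>eigenvalues_L c \<alpha>. \<nu> > \<mu>} = n"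

definition is_phi :: "real \<Rightarrow> real \<Rightarrow> nat \<Rightarrow> (real \<Rightarrow> real) \<Rightarrow> bool" where
  "is_phi c \<alpha> n \<phi> \<longleftrightarrow> (\<exists>\<mu>. nth_eigenvalue_L c \<alpha> n \<mu> \<and> is_eigenfun c \<alpha> \<mu> \<phi>) \<and>
     normsq_w \<alpha> \<phi> = 1"

definition SL_eigenvalue :: "real \<Rightarrow> real \<Rightarrow> (real \<Rightarrow> real) \<Rightarrow> real \<Rightarrow> bool" where
  "SL_eigenvalue c \<alpha> \<phi> chi \<longleftrightarrow> (\<exists>dphi D. \<forall>x\<in>{-1<..<1}.
     (\<phi> has_real_derivative dphi x) (at x) \<and>
     ((\<lambda>t. jweight \<alpha> t * (1 - t\<^sup>2) * dphi t) has_real_derivative D x) (at x) \<and>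
     - D x - c\<^sup>2 * x\<^sup>2 * jweight \<alpha> x * \<phi> x = chi * jweight \<alpha> x * \<phi> x)"

end

theory Submission
  imports Defs
begin

text \<open>
  Since \<open>L\<close> has an entire kernel, \<open>\<phi> = L \<phi> / \<mu>\<close> is the restriction of an entire function
  \<open>f\<close>; here \<open>\<mu> \<noteq> 0\<close>, for otherwise all moments of \<open>\<phi> \<omega>\<^sub>\<alpha>\<close> vanish and \<open>\<phi> = 0\<close>.
  The Sturm-Liouville equation turns into
  \<open>(1 - x\<^sup>2) f'' - 2(\<alpha> + 1) x f' + (chi + c\<^sup>2 x\<^sup>2) f = 0\<close> on \<open>(-1, 1)\<close>.
  By Abel's identity the Wronskian of \<open>f(x)\<close> and \<open>f(-x)\<close>, weighted by
  \<open>(1 - x\<^sup>2)\<^sup>\<alpha>\<^sup>+\<^sup>1\<close>, is constant and tends to \<open>0\<close> at \<open>1\<close>, so \<open>f(0) f'(0) = 0\<close> and \<open>f\<close> is even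
  or odd. If \<open>c\<^sup>2 \<le> (2\<alpha> + 1) chi\<close>, the Sonin function
  \<open>f\<^sup>2 + (1 - x\<^sup>2) f'\<^sup>2 / (chi + c\<^sup>2 x\<^sup>2)\<close> increases on \<open>[0, 1]\<close>, so \<open>|f|\<close> is maximal at \<open>1\<close>.
  Integrating the self-adjoint form of the equation from \<open>t\<close> to \<open>1\<close> bounds \<open>f'(t)\<close>, which gives
  \<open>f(t) \<ge> f(1) (1 - K (1 - t\<^sup>2))\<close> near \<open>1\<close> with \<open>K = (chi + c\<^sup>2) / (4(\<alpha> + 1)) + 1\<close>.
  Inserting this into \<open>\<integral> f\<^sup>2 \<omega>\<^sub>\<alpha> = 1\<close> yields \<open>f(1)\<^sup>2 \<le> (\<alpha> + 1)(\<alpha> + 2)(\<alpha> + 3) K\<^sup>\<alpha>\<^sup>+\<^sup>1\<close>,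
  and the hypotheses on \<open>chi\<close> and \<open>c\<^sup>2/chi\<close> bound the right-hand side by \<open>9 (\<alpha> + 1) chi\<^sup>\<alpha>\<^sup>+\<^sup>1\<close>.
\<close>

section \<open>The Jacobi weight\<close>

lemma one_minus_square_pos: "-1 < t \<Longrightarrow> t < 1 \<Longrightarrow> 0 < 1 - t\<^sup>2" for t :: real
  by (simp add: abs_square_less_1 abs_less_iff)

lemma has_real_derivative_one_minus_square_powr:
  assumes "-1 < t" "t < 1"
  shows "((\<lambda>t. (1 - t\<^sup>2) powr b) has_real_derivative b * (1 - t\<^sup>2) powr (b - 1) * (- 2 * t)) (at t)"
  using DERIV_fun_powr[of "\<lambda>t. 1 - t\<^sup>2" "- 2 * t" t b] one_minus_square_pos[OF assms]
  by (auto intro!: derivative_eq_intros)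

lemma continuous_on_one_minus_square_powr:
  "b > 0 \<Longrightarrow> continuous_on {-1..1} (\<lambda>t::real. (1 - t\<^sup>2) powr b)"
  by (rule continuous_on_powr') (auto intro!: continuous_intros simp: abs_square_le_1)

lemma one_minus_square_powr_tendsto_0:
  assumes "b > 0"
  shows "((\<lambda>t. (1 - t\<^sup>2) powr b) \<longlongrightarrow> 0) (at_left (1::real))"
proof -
  have "((\<lambda>t. (1 - t\<^sup>2) powr b) \<longlongrightarrow> (1 - 1\<^sup>2) powr b) (at 1 within {-1..1})"
    using continuous_on_one_minus_square_powr[OF assms, unfolded continuous_on_def, rule_format, of 1]
    by simp
  then show ?thesis
    using at_within_Icc_at_left[of "-1::real" 1] by simp
qed

text \<open>Self-adjoint form of the differential operator in the ODE, with weight \<open>(1 - t\<^sup>2)\<^sup>\<alpha>\<close>.\<close>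
lemma has_real_derivative_flux:
  assumes "-1 < t" "t < 1" and "(g has_real_derivative g' t) (at t)"
  shows "((\<lambda>t. (1 - t\<^sup>2) powr (\<alpha> + 1) * g t) has_real_derivative
           (1 - t\<^sup>2) powr \<alpha> * ((1 - t\<^sup>2) * g' t - 2 * (\<alpha> + 1) * t * g t)) (at t)"
proof -
  have pw: "(1 - t\<^sup>2) powr (\<alpha> + 1) = (1 - t\<^sup>2) powr \<alpha> * (1 - t\<^sup>2)"
    using one_minus_square_pos[OF assms(1,2)] by (simp add: powr_add)
  have deriv_eq: "(\<alpha> + 1) * (1 - t\<^sup>2) powr (\<alpha> + 1 - 1) * (- 2 * t) * g t + g' t * (1 - t\<^sup>2) powr (\<alpha> + 1)
      = (1 - t\<^sup>2) powr \<alpha> * ((1 - t\<^sup>2) * g' t - 2 * (\<alpha> + 1) * t * g t)"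
    unfolding pw by (simp add: algebra_simps)
  have "((\<lambda>t. (1 - t\<^sup>2) powr (\<alpha> + 1) * g t) has_real_derivative
      (\<alpha> + 1) * (1 - t\<^sup>2) powr (\<alpha> + 1 - 1) * (- 2 * t) * g t + g' t * (1 - t\<^sup>2) powr (\<alpha> + 1)) (at t)"
    using has_real_derivative_one_minus_square_powr[OF assms(1,2)] assms(3) by (rule DERIV_mult)
  then show ?thesis
    unfolding deriv_eq .
qed

lemma jweight_nonneg: "0 \<le> jweight \<alpha> t"
  by (simp add: jweight_def)

lemma jweight_pos: "-1 < t \<Longrightarrow> t < 1 \<Longrightarrow> 0 < jweight \<alpha> t"
  using one_minus_square_pos[of t] by (simp add: jweight_def)

lemma continuous_on_jweight: "continuous_on {-1<..<1} (jweight \<alpha>)"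
proof -
  have "0 \<le> 1 - t\<^sup>2 \<and> (1 - t\<^sup>2 = 0 \<longrightarrow> 0 < \<alpha>)" if "t \<in> {-1<..<1}" for t :: real
    using that one_minus_square_pos[of t] by simp
  then show ?thesis
    unfolding jweight_def by (intro continuous_on_powr' continuous_intros) auto
qed

lemma borel_measurable_jweight [measurable]: "jweight \<alpha> \<in> borel_measurable borel"
  unfolding jweight_def by measurable

lemma jweight_le_sum:
  assumes "-1 < t" "t < 1"
  shows "jweight \<alpha> t \<le> (1 - t) powr \<alpha> + (1 + t) powr \<alpha>"
proof -
  have pos: "0 < 1 - t" "0 < 1 + t" using assms by auto
  have factor: "jweight \<alpha> t = (1 - t) powr \<alpha> * (1 + t) powr \<alpha>"
    using pos by (simp add: jweight_def powr_mult[symmetric] power2_eq_square algebra_simps)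
  have "(1 - t) powr \<alpha> \<le> 1 \<or> (1 + t) powr \<alpha> \<le> 1"
  proof (cases "0 \<le> \<alpha>"; cases "0 \<le> t")
    assume "0 \<le> \<alpha>" "0 \<le> t"
    then show ?thesis using powr_mono2[of \<alpha> "1 - t" 1] pos by auto
  next
    assume "0 \<le> \<alpha>" "\<not> 0 \<le> t"
    then show ?thesis using powr_mono2[of \<alpha> "1 + t" 1] pos by auto
  next
    assume "\<not> 0 \<le> \<alpha>" "0 \<le> t"
    then show ?thesis using powr_mono2'[of \<alpha> 1 "1 + t"] by auto
  next
    assume "\<not> 0 \<le> \<alpha>" "\<not> 0 \<le> t"
    then show ?thesis using powr_mono2'[of \<alpha> 1 "1 - t"] by auto
  qed
  then show ?thesis
    unfolding factor by (auto intro: order_trans[OF mult_left_le_one_le] order_trans[OF mult_right_le_one_le])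
qed

lemma set_integrable_jweight:
  assumes "\<alpha> > -1"
  shows "set_integrable lborel {-1..1} (jweight \<alpha>)"
proof -
  define h where "h t = (1 - t) powr \<alpha> + (1 + t) powr \<alpha>" for t :: real
  define H where "H t = ((1 + t) powr (\<alpha> + 1) - (1 - t) powr (\<alpha> + 1)) / (\<alpha> + 1)" for t :: real
  have "(h has_integral H 1 - H (-1)) {-1..1}"
  proof (rule fundamental_theorem_of_calculus_interior)
    show "continuous_on {-1..1} H"
      unfolding H_def using assms by (intro continuous_intros continuous_on_powr') auto
  next
    fix t :: real assume t: "t \<in> {-1<..<1}"
    have "(H has_real_derivative ((\<alpha> + 1) * (1 + t) powr (\<alpha> + 1 - of_nat 1) * 1
        - (\<alpha> + 1) * (1 - t) powr (\<alpha> + 1 - of_nat 1) * (- 1)) / (\<alpha> + 1)) (at t)"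
      unfolding H_def using t
      by (intro DERIV_cdivide DERIV_diff DERIV_fun_powr) (auto intro!: derivative_eq_intros)
    moreover have "((\<alpha> + 1) * (1 + t) powr (\<alpha> + 1 - of_nat 1) * 1
        - (\<alpha> + 1) * (1 - t) powr (\<alpha> + 1 - of_nat 1) * (- 1)) / (\<alpha> + 1) = h t"
      using assms by (simp add: h_def field_simps)
    ultimately show "(H has_vector_derivative h t) (at t)"
      by (simp add: has_real_derivative_iff_has_vector_derivative[symmetric])
  qed simp
  then have "h absolutely_integrable_on {-1..1}"
    by (intro nonnegative_absolutely_integrable_1) (auto simp: h_def)
  moreover have "(\<lambda>t. indicator {-1..1} t *\<^sub>R h t) \<in> borel_measurable lborel"
    unfolding h_def by measurable
  ultimately have h_int: "set_integrable lborel {-1..1} h"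
    by (simp add: absolutely_integrable_on_def set_integrable_def integrable_completion)
  have "norm (jweight \<alpha> t) \<le> norm (h t)" if "t \<in> {-1..1}" for t
  proof (cases "t = -1 \<or> t = 1")
    case True
    then show ?thesis by (auto simp: jweight_def h_def)
  next
    case False
    then show ?thesis
      using that jweight_le_sum[of t \<alpha>] jweight_nonneg[of \<alpha> t] by (simp add: h_def)
  qed
  moreover have "set_borel_measurable lborel {-1..1} (jweight \<alpha>)"
    unfolding set_borel_measurable_def by measurable
  ultimately show ?thesis
    by (intro set_integrable_bound[OF h_int]) auto
qed

lemma set_integrable_mult_jweight:
  assumes "\<alpha> > -1" and "in_L2w \<alpha> \<phi>"
  shows "set_integrable lborel {-1..1} (\<lambda>y. \<phi> y * jweight \<alpha> y)"
proof (rule set_integrable_bound)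
  have "\<phi> \<in> borel_measurable lborel"
    and sq: "set_integrable lborel {-1..1} (\<lambda>y. (\<phi> y)\<^sup>2 * jweight \<alpha> y)"
    using assms(2) by (auto simp: in_L2w_def)
  then show "set_borel_measurable lborel {-1..1} (\<lambda>y. \<phi> y * jweight \<alpha> y)"
    unfolding set_borel_measurable_def by measurable
  show "set_integrable lborel {-1..1} (\<lambda>y. (\<phi> y)\<^sup>2 * jweight \<alpha> y + jweight \<alpha> y)"
    using sq set_integrable_jweight[OF assms(1)] by (rule set_integral_add)
  have "norm (\<phi> y * jweight \<alpha> y) \<le> norm ((\<phi> y)\<^sup>2 * jweight \<alpha> y + jweight \<alpha> y)" for y
  proof -
    have "\<bar>\<phi> y\<bar> \<le> (\<phi> y)\<^sup>2 + 1"
      using sum_squares_bound[of "\<bar>\<phi> y\<bar>" 1] by (simp add: power2_eq_square)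
    then have "\<bar>\<phi> y\<bar> * jweight \<alpha> y \<le> ((\<phi> y)\<^sup>2 + 1) * jweight \<alpha> y"
      using jweight_nonneg by (rule mult_right_mono)
    then show ?thesis
      using jweight_nonneg[of \<alpha> y] by (simp add: abs_mult distrib_right)
  qed
  then show "AE y in lborel. y \<in> {-1..1} \<longrightarrow> norm (\<phi> y * jweight \<alpha> y)
      \<le> norm ((\<phi> y)\<^sup>2 * jweight \<alpha> y + jweight \<alpha> y)"
    by simp
qed

section \<open>Moments and the exponential kernel\<close>

lemma set_integrable_continuous_mult:
  fixes h g :: "real \<Rightarrow> real"
  assumes h: "continuous_on UNIV h" and g: "set_integrable lborel {-1..1} g"
  shows "set_integrable lborel {-1..1} (\<lambda>y. h y * g y)"
proof -
  have "bounded (h ` {-1..1})"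
    using compact_continuous_image[OF continuous_on_subset[OF h subset_UNIV] compact_Icc]
    by (rule compact_imp_bounded)
  then obtain B where B: "\<forall>y\<in>{-1..1}. norm (h y) \<le> B"
    by (auto simp: bounded_iff)
  have "h \<in> borel_measurable lborel"
    using borel_measurable_continuous_onI[OF h] by simp
  moreover have "set_borel_measurable lborel {-1..1} g"
    using g unfolding set_integrable_def set_borel_measurable_def by (rule borel_measurable_integrable)
  ultimately have "(\<lambda>y. h y * (indicator {-1..1} y *\<^sub>R g y)) \<in> borel_measurable lborel"
    unfolding set_borel_measurable_def by (rule borel_measurable_times)
  then have meas: "set_borel_measurable lborel {-1..1} (\<lambda>y. h y * g y)"
    unfolding set_borel_measurable_def by (simp add: ac_simps)
  have bound: "AE y in lborel. y \<in> {-1..1} \<longrightarrow> norm (h y * g y) \<le> norm (B * \<bar>g y\<bar>)"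
  proof (rule AE_I2, rule impI)
    fix y :: real assume "y \<in> {-1..1}"
    then have "\<bar>h y\<bar> \<le> B"
      using B by simp
    moreover have "0 \<le> B"
      using \<open>\<bar>h y\<bar> \<le> B\<close> abs_ge_zero[of "h y"] by linarith
    ultimately show "norm (h y * g y) \<le> norm (B * \<bar>g y\<bar>)"
      by (simp add: abs_mult mult_right_mono)
  qed
  have "set_integrable lborel {-1..1} (\<lambda>y. B * \<bar>g y\<bar>)"
    using set_integrable_abs[OF g] by simp
  then show ?thesis
    using meas bound by (rule set_integrable_bound)
qed

lemma set_integral_poly_mult_eq_0:
  fixes g :: "real \<Rightarrow> real"
  assumes g: "set_integrable lborel {-1..1} g"
    and moments: "\<And>k. (LINT y:{-1..1}|lborel. y ^ k * g y) = 0"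
  shows "(LINT y:{-1..1}|lborel. (\<Sum>i\<le>n. a i * y ^ i) * g y) = 0"
proof -
  have "set_integrable lborel {-1..1} (\<lambda>y. y ^ i * g y)" for i
    by (rule set_integrable_continuous_mult[OF _ g]) (intro continuous_intros)
  then have "set_integrable lborel {-1..1} (\<lambda>y. a i * (y ^ i * g y))" for i
    by simp
  then have int: "integrable lborel (\<lambda>y. indicator {-1..1} y *\<^sub>R (a i * (y ^ i * g y)))" for i
    unfolding set_integrable_def .
  have "(LINT y:{-1..1}|lborel. (\<Sum>i\<le>n. a i * y ^ i) * g y)
      = integral\<^sup>L lborel (\<lambda>y. \<Sum>i\<le>n. indicator {-1..1} y *\<^sub>R (a i * (y ^ i * g y)))"
    unfolding set_lebesgue_integral_def
    by (simp add: sum_distrib_right sum_distrib_left mult.assoc mult.left_commute)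
  also have "\<dots> = (\<Sum>i\<le>n. integral\<^sup>L lborel (\<lambda>y. indicator {-1..1} y *\<^sub>R (a i * (y ^ i * g y))))"
    using int by (rule Bochner_Integration.integral_sum)
  also have "\<dots> = (\<Sum>i\<le>n. a i * (LINT y:{-1..1}|lborel. y ^ i * g y))"
    unfolding set_lebesgue_integral_def by (simp add: mult.left_commute)
  finally show ?thesis
    using moments by simp
qed

text \<open>Approximate \<open>h\<close> uniformly by a polynomial (Weierstrass), against which \<open>g\<close> integrates to 0.\<close>
lemma abs_set_integral_mult_le_if_moments_eq_0:
  fixes g h :: "real \<Rightarrow> real"
  assumes g: "set_integrable lborel {-1..1} g"
    and moments: "\<And>k. (LINT y:{-1..1}|lborel. y ^ k * g y) = 0"
    and h: "continuous_on UNIV h" and "e > 0"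
  shows "\<bar>LINT y:{-1..1}|lborel. h y * g y\<bar> \<le> e * (LINT y:{-1..1}|lborel. \<bar>g y\<bar>)"
proof -
  obtain P where "polynomial_function P" and P: "\<And>y. y \<in> {-1..1} \<Longrightarrow> \<bar>h y - P y\<bar> < e"
    using Stone_Weierstrass_polynomial_function[of "{-1..1::real}" h e] continuous_on_subset[OF h] \<open>e > 0\<close>
    by auto
  then obtain a n where P_eq: "P = (\<lambda>y. \<Sum>i\<le>n. a i * y ^ i)"
    using real_polynomial_function_iff_sum real_polynomial_function_eq by metis
  have hg: "set_integrable lborel {-1..1} (\<lambda>y. h y * g y)"
    using h g by (rule set_integrable_continuous_mult)
  have Pg: "set_integrable lborel {-1..1} (\<lambda>y. P y * g y)"
    using g unfolding P_eq by (intro set_integrable_continuous_mult continuous_intros)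
  have diff: "set_integrable lborel {-1..1} (\<lambda>y. h y * g y - P y * g y)"
    using hg Pg by (rule set_integral_diff)
  have "(LINT y:{-1..1}|lborel. P y * g y) = 0"
    unfolding P_eq by (rule set_integral_poly_mult_eq_0[OF g moments])
  then have "(LINT y:{-1..1}|lborel. h y * g y) = (LINT y:{-1..1}|lborel. h y * g y - P y * g y)"
    using set_integral_diff(2)[OF hg Pg] by simp
  also have "\<bar>\<dots>\<bar> \<le> (LINT y:{-1..1}|lborel. norm (h y * g y - P y * g y))"
    using set_integral_norm_bound[OF diff] by simp
  also have "\<dots> \<le> (LINT y:{-1..1}|lborel. e * \<bar>g y\<bar>)"
  proof (rule set_integral_mono)
    show "set_integrable lborel {-1..1} (\<lambda>y. norm (h y * g y - P y * g y))"
      using diff by (rule set_integrable_norm)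
    show "set_integrable lborel {-1..1} (\<lambda>y. e * \<bar>g y\<bar>)"
      using set_integrable_abs[OF g] by simp
    fix y :: real assume "y \<in> {-1..1}"
    then show "norm (h y * g y - P y * g y) \<le> e * \<bar>g y\<bar>"
      using P[of y] by (simp add: abs_mult left_diff_distrib[symmetric] mult_right_mono)
  qed
  finally show ?thesis
    by simp
qed

lemma set_integral_continuous_mult_eq_0:
  fixes g h :: "real \<Rightarrow> real"
  assumes g: "set_integrable lborel {-1..1} g"
    and moments: "\<And>k. (LINT y:{-1..1}|lborel. y ^ k * g y) = 0"
    and h: "continuous_on UNIV h"
  shows "(LINT y:{-1..1}|lborel. h y * g y) = 0"
proof -
  define M where "M = (LINT y:{-1..1}|lborel. \<bar>g y\<bar>)"
  have "M \<ge> 0"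
    unfolding M_def set_lebesgue_integral_def
    by (intro Bochner_Integration.integral_nonneg) (simp add: indicator_def)
  have "\<bar>LINT y:{-1..1}|lborel. h y * g y\<bar> \<le> 0 + d" if "d > 0" for d
  proof -
    have "\<bar>LINT y:{-1..1}|lborel. h y * g y\<bar> \<le> d / (M + 1) * M"
      using abs_set_integral_mult_le_if_moments_eq_0[OF g moments h, of "d / (M + 1)"] that \<open>M \<ge> 0\<close>
      by (simp add: M_def)
    also have "\<dots> \<le> d"
      using that \<open>M \<ge> 0\<close> by (simp add: field_simps)
    finally show ?thesis
      by simp
  qed
  then have "\<bar>LINT y:{-1..1}|lborel. h y * g y\<bar> \<le> 0"
    by (rule field_le_epsilon)
  then show ?thesis
    by simp
qed

lemma continuous_moments_eq_0_imp_eq_0: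
  fixes g :: "real \<Rightarrow> real"
  assumes g: "set_integrable lborel {-1..1} g"
    and moments: "\<And>k. (LINT y:{-1..1}|lborel. y ^ k * g y) = 0"
    and cont: "continuous_on {-1<..<1} g" and x0: "-1 < x0" "x0 < 1"
  shows "g x0 = 0"
proof (rule ccontr)
  assume "g x0 \<noteq> 0"
  \<comment> \<open>test \<open>g\<close> against the tent of height \<open>r\<close> at \<open>x0\<close> times \<open>g\<close> itself, extended continuously
     to the whole line by clamping the argument of \<open>g\<close> to the support of the tent\<close>
  define r where "r = min (x0 + 1) (1 - x0) / 2"
  have r: "0 < r" "-1 < x0 - r" "x0 + r < 1"
    using x0 by (auto simp: r_def min_def field_simps)
  define clamp where "clamp y = max (x0 - r) (min (x0 + r) y)" for y
  define tent where "tent y = max 0 (r - \<bar>y - x0\<bar>)" for y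
  define k where "k y = tent y * (g (clamp y))\<^sup>2" for y
  have "continuous_on UNIV (\<lambda>y. g (clamp y))"
    using r by (intro continuous_on_compose2[OF cont]) (auto simp: clamp_def intro!: continuous_intros)
  then have k_cont: "continuous_on UNIV k"
    and test_cont: "continuous_on UNIV (\<lambda>y. tent y * g (clamp y))"
    unfolding k_def tent_def by (auto intro!: continuous_intros)
  have "k = (\<lambda>y. tent y * g (clamp y) * g y)"
  proof
    fix y
    show "k y = tent y * g (clamp y) * g y"
      by (cases "\<bar>y - x0\<bar> \<le> r") (auto simp: k_def tent_def clamp_def power2_eq_square)
  qed
  then have "(LINT y:{-1..1}|lborel. k y) = 0" and "set_integrable lborel {-1..1} k"
    using set_integral_continuous_mult_eq_0[OF g moments test_cont]
      set_integrable_continuous_mult[OF test_cont g]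
    by simp_all
  then have "(k has_integral 0) (cbox (-1) 1)"
    using set_borel_integral_eq_integral[of "{-1..1}" k]
    by (metis has_integral_integral cbox_interval)
  then have "k x0 = 0"
  proof (rule has_integral_0_cbox_imp_0[rotated 2])
    show "continuous_on (cbox (-1) 1) k"
      using k_cont by (rule continuous_on_subset) simp
    show "\<And>x. x \<in> box (-1) 1 \<Longrightarrow> 0 \<le> k x"
      unfolding k_def tent_def by simp
    show "box (-1) (1::real) \<noteq> {}" and "x0 \<in> cbox (-1) 1"
      using x0 by (simp_all add: box_real cbox_interval)
  qed
  moreover have "k x0 = r * (g x0)\<^sup>2"
    using r by (simp add: k_def tent_def clamp_def)
  ultimately show False
    using r \<open>g x0 \<noteq> 0\<close> by simp
qed

lemma sums_set_integral_exp_mult: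
  fixes g :: "real \<Rightarrow> real"
  assumes g: "set_integrable lborel {-1..1} g"
  shows "(\<lambda>k. z ^ k / fact k * (LINT y:{-1..1}|lborel. y ^ k * g y))
           sums (LINT y:{-1..1}|lborel. exp (z * y) * g y)"
proof -
  define G where "G y = indicator {-1..1} y * g y" for y :: real
  have G_int: "integrable lborel G"
    using g unfolding G_def set_integrable_def by simp
  then have [measurable]: "G \<in> borel_measurable lborel"
    by (rule borel_measurable_integrable)
  have power_G: "\<bar>y ^ k * G y\<bar> \<le> \<bar>G y\<bar>" for k y
    by (cases "y \<in> {-1..1}") (auto simp: G_def abs_mult power_abs intro!: mult_left_le_one_le power_le_one)
  define F where "F k y = z ^ k / fact k * (y ^ k * G y)" for k y
  have F_int: "integrable lborel (F k)" for k
  proof -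
    have "integrable lborel (\<lambda>y. y ^ k * G y)"
      using power_G by (intro Bochner_Integration.integrable_bound[OF integrable_abs[OF G_int]]) auto
    then show ?thesis
      unfolding F_def by simp
  qed
  have F_le: "norm (F k y) \<le> inverse (fact k) * \<bar>z\<bar> ^ k * \<bar>G y\<bar>" for k y
  proof -
    have "norm (F k y) = inverse (fact k) * \<bar>z\<bar> ^ k * \<bar>y ^ k * G y\<bar>"
      unfolding F_def by (simp add: abs_mult divide_inverse power_abs)
    also have "\<dots> \<le> inverse (fact k) * \<bar>z\<bar> ^ k * \<bar>G y\<bar>"
      using power_G by (intro mult_left_mono) auto
    finally show ?thesis .
  qed
  have exp_summable: "summable (\<lambda>k. inverse (fact k) * \<bar>z\<bar> ^ k * C)" for C
    by (intro summable_mult2 summable_exp)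
  have "AE y in lborel. summable (\<lambda>k. norm (F k y))"
    using F_le by (intro AE_I2 summable_comparison_test[OF _ exp_summable]) auto
  moreover have "summable (\<lambda>k. \<integral>y. norm (F k y) \<partial>lborel)"
  proof (rule summable_comparison_test[OF _ exp_summable])
    have "(\<integral>y. norm (F k y) \<partial>lborel) \<le> (\<integral>y. inverse (fact k) * \<bar>z\<bar> ^ k * \<bar>G y\<bar> \<partial>lborel)" for k
      using F_int G_int F_le by (intro integral_mono) auto
    then show "\<exists>N. \<forall>k\<ge>N. norm (\<integral>y. norm (F k y) \<partial>lborel) \<le> inverse (fact k) * \<bar>z\<bar> ^ k * (\<integral>y. \<bar>G y\<bar> \<partial>lborel)"
      by auto
  qed
  ultimately have "(\<lambda>k. integral\<^sup>L lborel (F k)) sums (\<integral>y. (\<Sum>k. F k y) \<partial>lborel)"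
    using F_int by (intro sums_integral)
  moreover have "(\<Sum>k. F k y) = exp (z * y) * G y" for y
  proof -
    have "(\<lambda>k. (z * y) ^ k /\<^sub>R fact k * G y) sums (exp (z * y) * G y)"
      by (intro sums_mult2 exp_converges)
    then show ?thesis
      by (simp add: sums_iff F_def power_mult_distrib divide_inverse algebra_simps)
  qed
  moreover have "integral\<^sup>L lborel (F k) = z ^ k / fact k * (LINT y:{-1..1}|lborel. y ^ k * g y)" for k
  proof -
    have "integral\<^sup>L lborel (F k) = z ^ k / fact k * integral\<^sup>L lborel (\<lambda>y. y ^ k * G y)"
      unfolding F_def by (rule integral_mult_right_zero)
    then show ?thesis
      unfolding G_def set_lebesgue_integral_def by (simp add: mult.left_commute)
  qed
  ultimately show ?thesis
    unfolding G_def set_lebesgue_integral_def by (simp add: mult.left_commute)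
qed

lemma powser_eq_0_on_interval_imp_coeff_eq_0:
  fixes a :: "nat \<Rightarrow> real"
  assumes "\<And>y. summable (\<lambda>n. a n * y ^ n)"
    and "\<And>x. -1 < x \<Longrightarrow> x < 1 \<Longrightarrow> (\<Sum>n. a n * x ^ n) = 0"
  shows "a k = 0"
  using assms
proof (induction k arbitrary: a)
  case 0
  then show ?case
    using "0.prems"(2)[of 0] by simp
next
  case (Suc k)
  have "diffs a k = 0"
  proof (rule Suc.IH)
    show "summable (\<lambda>n. diffs a n * y ^ n)" for y
      using Suc.prems(1) by (rule termdiff_converges_all)
    fix x :: real assume x: "-1 < x" "x < 1"
    have "((\<lambda>x. \<Sum>n. a n * x ^ n) has_field_derivative (\<Sum>n. diffs a n * x ^ n)) (at x)"
      using Suc.prems(1) by (rule termdiffs_strong_converges_everywhere)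
    moreover have "((\<lambda>x. \<Sum>n. a n * x ^ n) has_field_derivative 0) (at x)"
      by (rule has_field_derivative_transform_within_open[of "\<lambda>_. 0" 0 x "{-1<..<1}"])
        (use x Suc.prems(2) in auto)
    ultimately show "(\<Sum>n. diffs a n * x ^ n) = 0"
      by (rule DERIV_unique)
  qed
  then show ?case
    by (simp add: diffs_def)
qed

section \<open>The prolate differential equation\<close>

locale prolate_ode =
  fixes f f' f'' :: "real \<Rightarrow> real" and \<alpha> chi c :: real
  assumes has_deriv: "\<And>x. (f has_real_derivative f' x) (at x)"
    and has_deriv2: "\<And>x. (f' has_real_derivative f'' x) (at x)"
    and ode: "\<And>x. -1 < x \<Longrightarrow> x < 1 \<Longrightarrow>
      (1 - x\<^sup>2) * f'' x - 2 * (\<alpha> + 1) * x * f' x + (chi + c\<^sup>2 * x\<^sup>2) * f x = 0"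
    and alpha_gt: "\<alpha> > -1"
    and chi_pos: "chi > 0"
begin

lemma continuous_on_f: "continuous_on S f"
  using has_deriv by (meson DERIV_continuous continuous_at_imp_continuous_on)

lemma continuous_on_f': "continuous_on S f'"
  using has_deriv2 by (meson DERIV_continuous continuous_at_imp_continuous_on)

lemma flux_has_derivative:
  assumes "-1 < t" "t < 1"
  shows "((\<lambda>t. (1 - t\<^sup>2) powr (\<alpha> + 1) * f' t) has_real_derivative
           (1 - t\<^sup>2) powr \<alpha> * (- ((chi + c\<^sup>2 * t\<^sup>2) * f t))) (at t)"
proof -
  have "(1 - t\<^sup>2) * f'' t - 2 * (\<alpha> + 1) * t * f' t = - ((chi + c\<^sup>2 * t\<^sup>2) * f t)"
    using ode[OF assms] by linarith
  then show ?thesis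
    using has_real_derivative_flux[where g = f' and g' = f'' and \<alpha> = \<alpha>, OF assms has_deriv2] by simp
qed

lemma uminus: "prolate_ode (\<lambda>x. - f x) (\<lambda>x. - f' x) (\<lambda>x. - f'' x) \<alpha> chi c"
proof
  fix x :: real
  show "((\<lambda>x. - f x) has_real_derivative - f' x) (at x)"
    using has_deriv by (rule DERIV_minus)
  show "((\<lambda>x. - f' x) has_real_derivative - f'' x) (at x)"
    using has_deriv2 by (rule DERIV_minus)
  assume "-1 < x" "x < 1"
  then show "(1 - x\<^sup>2) * - f'' x - 2 * (\<alpha> + 1) * x * - f' x + (chi + c\<^sup>2 * x\<^sup>2) * - f x = 0"
    using ode[of x] by (simp add: algebra_simps)
qed (fact alpha_gt chi_pos)+

lemma mirror: "prolate_ode (\<lambda>x. f (- x)) (\<lambda>x. - f' (- x)) (\<lambda>x. f'' (- x)) \<alpha> chi c"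
proof
  fix x :: real
  show "((\<lambda>x. f (- x)) has_real_derivative - f' (- x)) (at x)"
    by (rule DERIV_mirror[THEN iffD1, OF has_deriv])
  show "((\<lambda>x. - f' (- x)) has_real_derivative f'' (- x)) (at x)"
    using DERIV_minus[OF DERIV_mirror[where f = f' and x = x and y = "f'' (- x)", THEN iffD1]]
      has_deriv2 by simp
  assume "-1 < x" "x < 1"
  then show "(1 - x\<^sup>2) * f'' (- x) - 2 * (\<alpha> + 1) * x * - f' (- x) + (chi + c\<^sup>2 * x\<^sup>2) * f (- x) = 0"
    using ode[of "- x"] by simp
qed (fact alpha_gt chi_pos)+

lemma diff_scaled:
  assumes "prolate_ode g g' g'' \<alpha> chi c"
  shows "prolate_ode (\<lambda>x. f x - e * g x) (\<lambda>x. f' x - e * g' x) (\<lambda>x. f'' x - e * g'' x) \<alpha> chi c"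
proof -
  interpret g: prolate_ode g g' g'' \<alpha> chi c
    by (fact assms)
  show ?thesis
  proof
    fix x :: real
    show "((\<lambda>x. f x - e * g x) has_real_derivative f' x - e * g' x) (at x)"
      by (intro DERIV_diff DERIV_cmult has_deriv g.has_deriv)
    show "((\<lambda>x. f' x - e * g' x) has_real_derivative f'' x - e * g'' x) (at x)"
      by (intro DERIV_diff DERIV_cmult has_deriv2 g.has_deriv2)
    assume x: "-1 < x" "x < 1"
    have "(1 - x\<^sup>2) * (f'' x - e * g'' x) - 2 * (\<alpha> + 1) * x * (f' x - e * g' x)
        + (chi + c\<^sup>2 * x\<^sup>2) * (f x - e * g x)
      = ((1 - x\<^sup>2) * f'' x - 2 * (\<alpha> + 1) * x * f' x + (chi + c\<^sup>2 * x\<^sup>2) * f x)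
        - e * ((1 - x\<^sup>2) * g'' x - 2 * (\<alpha> + 1) * x * g' x + (chi + c\<^sup>2 * x\<^sup>2) * g x)"
      by (simp add: algebra_simps)
    then show "(1 - x\<^sup>2) * (f'' x - e * g'' x) - 2 * (\<alpha> + 1) * x * (f' x - e * g' x)
        + (chi + c\<^sup>2 * x\<^sup>2) * (f x - e * g x) = 0"
      using ode[OF x] g.ode[OF x] by simp
  qed (fact alpha_gt chi_pos)+
qed

text \<open>On \<open>[0, x]\<close> with \<open>x < 1\<close> the equation is nonsingular, so \<open>f\<^sup>2 + f'\<^sup>2\<close> grows at most
  exponentially (Gronwall); this gives uniqueness for the initial value problem at \<open>0\<close>.\<close>
lemma energy_derivative_le:
  assumes t: "0 \<le> t" "t \<le> x" and "x < 1"
  shows "2 * f t * f' t + 2 * f' t * f'' t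
           \<le> (1 + (4 * (\<alpha> + 1) + chi + c\<^sup>2) / (1 - x\<^sup>2)) * ((f t)\<^sup>2 + (f' t)\<^sup>2)"
proof -
  define E where "E = (f t)\<^sup>2 + (f' t)\<^sup>2"
  define L where "L = 4 * (\<alpha> + 1) + chi + c\<^sup>2"
  have "0 < 1 - x\<^sup>2" "1 - x\<^sup>2 \<le> 1 - t\<^sup>2" "t\<^sup>2 \<le> 1"
    using assms by (auto intro!: power_mono simp: abs_square_less_1 abs_square_le_1)
  have cross: "\<bar>2 * f t * f' t\<bar> \<le> E"
    using sum_squares_bound[of "\<bar>f t\<bar>" "\<bar>f' t\<bar>"] unfolding E_def by (simp add: abs_mult)
  have ode_t: "(1 - t\<^sup>2) * f'' t = 2 * (\<alpha> + 1) * t * f' t - (chi + c\<^sup>2 * t\<^sup>2) * f t"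
    using ode[of t] assms by simp
  have "(1 - t\<^sup>2) * (2 * f' t * f'' t) = 2 * f' t * ((1 - t\<^sup>2) * f'' t)"
    by (simp add: algebra_simps)
  also have "\<dots> = 4 * (\<alpha> + 1) * t * (f' t)\<^sup>2 - (chi + c\<^sup>2 * t\<^sup>2) * (2 * f t * f' t)"
    unfolding ode_t by (simp add: algebra_simps power2_eq_square)
  also have "\<dots> \<le> 4 * (\<alpha> + 1) * E + (chi + c\<^sup>2) * E"
  proof -
    have "t * (f' t)\<^sup>2 \<le> (f' t)\<^sup>2"
      using assms by (intro mult_left_le_one_le) auto
    then have "t * (f' t)\<^sup>2 \<le> E"
      unfolding E_def by (simp add: add_increasing)
    then have first: "4 * (\<alpha> + 1) * t * (f' t)\<^sup>2 \<le> 4 * (\<alpha> + 1) * E"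
      using alpha_gt by (simp add: mult.assoc)
    have "(chi + c\<^sup>2 * t\<^sup>2) * (- (2 * f t * f' t)) \<le> (chi + c\<^sup>2 * t\<^sup>2) * E"
      using cross chi_pos by (intro mult_left_mono) auto
    also have "\<dots> \<le> (chi + c\<^sup>2) * E"
      using \<open>t\<^sup>2 \<le> 1\<close> by (intro mult_right_mono) (auto simp: E_def mult_left_le)
    finally have second: "- ((chi + c\<^sup>2 * t\<^sup>2) * (2 * f t * f' t)) \<le> (chi + c\<^sup>2) * E"
      by simp
    from first second show ?thesis
      by linarith
  qed
  finally have "2 * f' t * f'' t \<le> L * E / (1 - t\<^sup>2)"
    using \<open>0 < 1 - x\<^sup>2\<close> \<open>1 - x\<^sup>2 \<le> 1 - t\<^sup>2\<close> by (simp add: L_def field_simps)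
  also have "\<dots> \<le> L * E / (1 - x\<^sup>2)"
    using \<open>0 < 1 - x\<^sup>2\<close> \<open>1 - x\<^sup>2 \<le> 1 - t\<^sup>2\<close> alpha_gt chi_pos
    by (intro divide_left_mono) (auto simp: L_def E_def)
  finally show ?thesis
    using cross \<open>0 < 1 - x\<^sup>2\<close> unfolding E_def[symmetric] L_def[symmetric]
    by (simp add: distrib_right)
qed

lemma eq_0_if_initial_values_eq_0:
  assumes "f 0 = 0" "f' 0 = 0" and x: "0 \<le> x" "x \<le> 1"
  shows "f x = 0"
proof -
  have interior: "f x = 0" if "0 \<le> x" "x < 1" for x
  proof -
    define C where "C = 1 + (4 * (\<alpha> + 1) + chi + c\<^sup>2) / (1 - x\<^sup>2)"
    define G where "G t = ((f t)\<^sup>2 + (f' t)\<^sup>2) * exp (- C * t)" for t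
    have "G x \<le> G 0"
    proof (rule DERIV_nonpos_imp_nonincreasing[OF \<open>0 \<le> x\<close>])
      fix t assume "0 \<le> t" "t \<le> x"
      have "(G has_real_derivative
          (2 * f t * f' t + 2 * f' t * f'' t - C * ((f t)\<^sup>2 + (f' t)\<^sup>2)) * exp (- C * t)) (at t)"
        unfolding G_def
        by (auto intro!: derivative_eq_intros has_deriv has_deriv2 simp: algebra_simps)
      moreover have "2 * f t * f' t + 2 * f' t * f'' t - C * ((f t)\<^sup>2 + (f' t)\<^sup>2) \<le> 0"
        using energy_derivative_le[OF \<open>0 \<le> t\<close> \<open>t \<le> x\<close> \<open>x < 1\<close>] unfolding C_def by simp
      ultimately show "\<exists>y. (G has_real_derivative y) (at t) \<and> y \<le> 0"
        by (intro exI conjI) (auto simp: mult_nonpos_nonneg)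
    qed
    then have "(f x)\<^sup>2 + (f' x)\<^sup>2 \<le> 0"
      using assms(1,2) by (simp add: G_def mult_le_0_iff)
    then have "(f x)\<^sup>2 \<le> 0"
      using zero_le_power2[of "f' x"] by linarith
    then show ?thesis
      by simp
  qed
  show ?thesis
  proof (cases "x = 1")
    case True
    have "(f \<longlongrightarrow> f 1) (at_left 1)"
      using continuous_on_f[of UNIV] by (auto simp: continuous_on_def intro: tendsto_mono[OF at_le])
    moreover have "eventually (\<lambda>y. y \<in> {0<..<1}) (at_left (1::real))"
      by (rule eventually_at_left_real) simp
    then have "eventually (\<lambda>y. f y = 0) (at_left (1::real))"
      by (rule eventually_mono) (use interior in auto)
    ultimately have "((\<lambda>_. 0) \<longlongrightarrow> f 1) (at_left (1::real))"
      by (rule Lim_transform_eventually)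
    then show ?thesis
      using True by (simp add: tendsto_const_iff)
  qed (use interior x in auto)
qed

lemma weighted_wronskian_has_derivative_0:
  assumes "prolate_ode g g' g'' \<alpha> chi c" and t: "-1 < t" "t < 1"
  shows "((\<lambda>s. (1 - s\<^sup>2) powr (\<alpha> + 1) * (f s * g' s - f' s * g s)) has_real_derivative 0) (at t)"
proof -
  interpret g: prolate_ode g g' g'' \<alpha> chi c
    by (fact assms)
  have "((\<lambda>s. f s * ((1 - s\<^sup>2) powr (\<alpha> + 1) * g' s) - g s * ((1 - s\<^sup>2) powr (\<alpha> + 1) * f' s))
      has_real_derivative
        f t * ((1 - t\<^sup>2) powr \<alpha> * (- ((chi + c\<^sup>2 * t\<^sup>2) * g t))) + f' t * ((1 - t\<^sup>2) powr (\<alpha> + 1) * g' t)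
        - (g t * ((1 - t\<^sup>2) powr \<alpha> * (- ((chi + c\<^sup>2 * t\<^sup>2) * f t))) + g' t * ((1 - t\<^sup>2) powr (\<alpha> + 1) * f' t)))
      (at t)"
    using t by (intro DERIV_diff DERIV_mult' has_deriv g.has_deriv flux_has_derivative g.flux_has_derivative)
  then show ?thesis
    by (simp add: algebra_simps)
qed

lemma wronskian_eq_0:
  assumes "prolate_ode g g' g'' \<alpha> chi c" and t: "-1 < t" "t < 1"
  shows "f t * g' t - f' t * g t = 0"
proof -
  interpret g: prolate_ode g g' g'' \<alpha> chi c
    by (fact assms)
  define p where "p s = (1 - s\<^sup>2) powr (\<alpha> + 1)" for s
  define W where "W s = f s * g' s - f' s * g s" for s
  have const: "p s * W s = p t * W t" if "-1 < s" "s < 1" for s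
    using DERIV_isconst3[of "-1" 1 s t "\<lambda>s. p s * W s"] weighted_wronskian_has_derivative_0[OF assms(1)] that t
    unfolding p_def W_def by auto
  have "((\<lambda>s. p s * W s) \<longlongrightarrow> 0 * W 1) (at_left 1)"
  proof (intro tendsto_mult)
    show "(p \<longlongrightarrow> 0) (at_left 1)"
      unfolding p_def using alpha_gt by (intro one_minus_square_powr_tendsto_0) simp
    have "continuous_on UNIV W"
      unfolding W_def
      by (intro continuous_intros continuous_on_f continuous_on_f' g.continuous_on_f g.continuous_on_f')
    then show "(W \<longlongrightarrow> W 1) (at_left 1)"
      by (auto simp: continuous_on_def intro: tendsto_mono[OF at_le])
  qed
  moreover have "eventually (\<lambda>s. s \<in> {0<..<1}) (at_left (1::real))"
    by (rule eventually_at_left_real) simp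
  then have "eventually (\<lambda>s. p s * W s = p t * W t) (at_left (1::real))"
    by (rule eventually_mono) (use const in auto)
  ultimately have "((\<lambda>_. p t * W t) \<longlongrightarrow> 0 * W 1) (at_left (1::real))"
    by (rule Lim_transform_eventually)
  then have "p t * W t = 0"
    by (simp add: tendsto_const_iff)
  moreover have "p t > 0"
    using one_minus_square_pos[OF t] by (simp add: p_def)
  ultimately show ?thesis
    by (simp add: W_def)
qed

lemma abs_f_minus_eq:
  assumes "-1 \<le> x" "x \<le> 1"
  shows "\<bar>f (- x)\<bar> = \<bar>f x\<bar>"
proof -
  have "f 0 * f' 0 = 0"
    using wronskian_eq_0[OF mirror, of 0] by simp
  \<comment> \<open>hence \<open>f\<close> is even or odd, according to which initial value vanishes\<close>
  define \<epsilon> :: real where "\<epsilon> = (if f' 0 = 0 then 1 else -1)"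
  interpret u: prolate_ode "\<lambda>x. f x - \<epsilon> * f (- x)" "\<lambda>x. f' x - \<epsilon> * - f' (- x)"
    "\<lambda>x. f'' x - \<epsilon> * f'' (- x)" \<alpha> chi c
    using mirror by (rule diff_scaled)
  have even_odd: "f y = \<epsilon> * f (- y)" if "0 \<le> y" "y \<le> 1" for y
    using u.eq_0_if_initial_values_eq_0[OF _ _ that] \<open>f 0 * f' 0 = 0\<close> by (auto simp: \<epsilon>_def)
  have "\<bar>\<epsilon>\<bar> = 1"
    by (simp add: \<epsilon>_def)
  show ?thesis
    using even_odd[of x] even_odd[of "- x"] assms \<open>\<bar>\<epsilon>\<bar> = 1\<close>
    by (cases "0 \<le> x") (auto simp: abs_mult)
qed

end

section \<open>The Sonin function\<close>

locale prolate_ode_sonin = prolate_ode +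
  assumes c_sq_le: "c\<^sup>2 \<le> (2 * \<alpha> + 1) * chi"
begin

lemma uminus_sonin: "prolate_ode_sonin (\<lambda>x. - f x) (\<lambda>x. - f' x) (\<lambda>x. - f'' x) \<alpha> chi c"
  using uminus c_sq_le by (simp add: prolate_ode_sonin_def prolate_ode_sonin_axioms_def)

definition sonin :: "real \<Rightarrow> real" where
  "sonin x = (f x)\<^sup>2 + (1 - x\<^sup>2) * (f' x)\<^sup>2 / (chi + c\<^sup>2 * x\<^sup>2)"

lemma sonin_denominator_pos: "0 < chi + c\<^sup>2 * x\<^sup>2"
  using chi_pos by (simp add: add_pos_nonneg)

lemma sonin_has_derivative:
  assumes "-1 < t" "t < 1"
  shows "(sonin has_real_derivative
           2 * t * (f' t)\<^sup>2 * ((2 * \<alpha> + 1) * (chi + c\<^sup>2 * t\<^sup>2) - c\<^sup>2 * (1 - t\<^sup>2)) / (chi + c\<^sup>2 * t\<^sup>2)\<^sup>2) (at t)"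
proof -
  define s where "s = chi + c\<^sup>2 * t\<^sup>2"
  have "s > 0"
    unfolding s_def by (rule sonin_denominator_pos)
  have deriv: "(sonin has_real_derivative 2 * f t * f' t + (((- 2 * t) * (f' t)\<^sup>2 + (1 - t\<^sup>2) * (2 * f' t * f'' t)) * s
      - (1 - t\<^sup>2) * (f' t)\<^sup>2 * (2 * c\<^sup>2 * t)) / (s * s)) (at t)"
    unfolding sonin_def[abs_def] s_def
    by (rule derivative_eq_intros has_deriv has_deriv2 refl | use \<open>s > 0\<close> in \<open>simp add: s_def\<close>)+
  have ode_t: "(1 - t\<^sup>2) * f'' t = 2 * (\<alpha> + 1) * t * f' t - s * f t"
    using ode[OF assms] unfolding s_def by linarith
  have "2 * f t * f' t + (((- 2 * t) * (f' t)\<^sup>2 + (1 - t\<^sup>2) * (2 * f' t * f'' t)) * s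
      - (1 - t\<^sup>2) * (f' t)\<^sup>2 * (2 * c\<^sup>2 * t)) / (s * s)
    = 2 * f t * f' t + (((- 2 * t) * (f' t)\<^sup>2 + 2 * f' t * ((1 - t\<^sup>2) * f'' t)) * s
      - (1 - t\<^sup>2) * (f' t)\<^sup>2 * (2 * c\<^sup>2 * t)) / (s * s)"
    by (simp add: algebra_simps)
  also have "\<dots> = 2 * t * (f' t)\<^sup>2 * ((2 * \<alpha> + 1) * s - c\<^sup>2 * (1 - t\<^sup>2)) / s\<^sup>2"
    unfolding ode_t using \<open>s > 0\<close> by (simp add: divide_simps) (simp add: s_def algebra_simps power2_eq_square)
  finally have derivative_eq: "2 * f t * f' t + (((- 2 * t) * (f' t)\<^sup>2 + (1 - t\<^sup>2) * (2 * f' t * f'' t)) * s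
      - (1 - t\<^sup>2) * (f' t)\<^sup>2 * (2 * c\<^sup>2 * t)) / (s * s)
    = 2 * t * (f' t)\<^sup>2 * ((2 * \<alpha> + 1) * s - c\<^sup>2 * (1 - t\<^sup>2)) / s\<^sup>2" .
  show ?thesis
    using deriv unfolding derivative_eq unfolding s_def .
qed

lemma sonin_mono:
  assumes "0 \<le> x" "x \<le> y" "y \<le> 1"
  shows "sonin x \<le> sonin y"
proof (rule DERIV_nonneg_imp_increasing_open[OF \<open>x \<le> y\<close>])
  show "continuous_on {x..y} sonin"
    unfolding sonin_def[abs_def] using sonin_denominator_pos
    by (intro continuous_intros continuous_on_f continuous_on_f') (auto simp: less_imp_neq[symmetric])
  fix t assume t: "x < t" "t < y"
  have "0 \<le> (2 * \<alpha> + 1) * chi"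
    using c_sq_le zero_le_power2[of c] by linarith
  then have "2 * \<alpha> + 1 \<ge> 0"
    using chi_pos by (simp add: zero_le_mult_iff)
  have "c\<^sup>2 * (1 - t\<^sup>2) \<le> c\<^sup>2"
    by (simp add: mult_left_le)
  also have "\<dots> \<le> (2 * \<alpha> + 1) * chi"
    by (fact c_sq_le)
  also have "\<dots> \<le> (2 * \<alpha> + 1) * (chi + c\<^sup>2 * t\<^sup>2)"
    using \<open>2 * \<alpha> + 1 \<ge> 0\<close> by (intro mult_left_mono) auto
  finally have "0 \<le> 2 * t * (f' t)\<^sup>2 * ((2 * \<alpha> + 1) * (chi + c\<^sup>2 * t\<^sup>2) - c\<^sup>2 * (1 - t\<^sup>2)) / (chi + c\<^sup>2 * t\<^sup>2)\<^sup>2"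
    using t assms by simp
  then show "\<exists>d. (sonin has_real_derivative d) (at t) \<and> 0 \<le> d"
    using sonin_has_derivative[of t] t assms by (intro exI conjI) auto
qed

lemma abs_le_abs_at_1:
  assumes "-1 \<le> x" "x \<le> 1"
  shows "\<bar>f x\<bar> \<le> \<bar>f 1\<bar>"
proof -
  have sq: "(f y)\<^sup>2 \<le> (f 1)\<^sup>2" if "0 \<le> y" "y \<le> 1" for y
  proof -
    have "0 \<le> (1 - y\<^sup>2) * (f' y)\<^sup>2 / (chi + c\<^sup>2 * y\<^sup>2)"
      using that sonin_denominator_pos by (intro divide_nonneg_pos mult_nonneg_nonneg) (auto simp: abs_square_le_1)
    then have "(f y)\<^sup>2 \<le> sonin y"
      by (simp add: sonin_def)
    also have "\<dots> \<le> sonin 1"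
      using that by (rule sonin_mono) simp
    finally show ?thesis
      by (simp add: sonin_def)
  qed
  show ?thesis
  proof (cases "0 \<le> x")
    case True
    then show ?thesis
      using \<open>x \<le> 1\<close> sq by (simp add: abs_le_square_iff)
  next
    case False
    then have "\<bar>f (- x)\<bar> \<le> \<bar>f 1\<bar>"
      using \<open>-1 \<le> x\<close> sq[of "- x"] by (simp add: abs_le_square_iff)
    then show ?thesis
      using abs_f_minus_eq[OF assms] by simp
  qed
qed

end

section \<open>The bound at the endpoint\<close>

definition bump_primitive :: "real \<Rightarrow> real \<Rightarrow> real \<Rightarrow> real" where
  "bump_primitive \<alpha> K t = - ((1 - t\<^sup>2) powr (\<alpha> + 1) / (\<alpha> + 1)
     - 2 * K * (1 - t\<^sup>2) powr (\<alpha> + 2) / (\<alpha> + 2) + K\<^sup>2 * (1 - t\<^sup>2) powr (\<alpha> + 3) / (\<alpha> + 3)) / 2"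

lemma bump_primitive_has_derivative:
  assumes "-1 < t" "t < 1" "\<alpha> > -1"
  shows "(bump_primitive \<alpha> K has_real_derivative t * (1 - t\<^sup>2) powr \<alpha> * (1 - K * (1 - t\<^sup>2))\<^sup>2) (at t)"
proof -
  define v where "v = 1 - t\<^sup>2"
  have "v > 0"
    using one_minus_square_pos[OF assms(1,2)] by (simp add: v_def)
  define D where "D = - ((\<alpha> + 1) * v powr (\<alpha> + 1 - 1) * (- 2 * t) / (\<alpha> + 1)
    - 2 * K * ((\<alpha> + 2) * v powr (\<alpha> + 2 - 1) * (- 2 * t)) / (\<alpha> + 2)
    + K\<^sup>2 * ((\<alpha> + 3) * v powr (\<alpha> + 3 - 1) * (- 2 * t)) / (\<alpha> + 3)) / 2"
  have "(bump_primitive \<alpha> K has_real_derivative D) (at t)"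
    unfolding bump_primitive_def[abs_def] D_def v_def
    by (intro DERIV_cdivide DERIV_minus DERIV_add DERIV_diff DERIV_cmult
        has_real_derivative_one_minus_square_powr assms(1,2))
  moreover have e1: "(\<alpha> + 1) * v powr (\<alpha> + 1 - 1) * (- 2 * t) / (\<alpha> + 1) = v powr \<alpha> * (- 2 * t)"
    and e2: "2 * K * ((\<alpha> + 2) * v powr (\<alpha> + 2 - 1) * (- 2 * t)) / (\<alpha> + 2) = 2 * K * (v powr \<alpha> * v * (- 2 * t))"
    and e3: "K\<^sup>2 * ((\<alpha> + 3) * v powr (\<alpha> + 3 - 1) * (- 2 * t)) / (\<alpha> + 3) = K\<^sup>2 * (v powr \<alpha> * v\<^sup>2 * (- 2 * t))"
    using \<open>v > 0\<close> assms(3) by (simp_all add: powr_add powr_numeral add.commute[of 1] add.commute[of 2])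
  have "D = t * v powr \<alpha> * (1 - K * v)\<^sup>2"
    unfolding D_def e1 e2 e3 by (simp add: power2_eq_square field_simps)
  ultimately show ?thesis
    unfolding v_def by simp
qed

lemma bump_primitive_at_sqrt:
  assumes "\<alpha> > -1" and "K \<ge> 1"
  shows "bump_primitive \<alpha> K (sqrt (1 - 1 / K)) = - ((1 / K) powr (\<alpha> + 1) / ((\<alpha> + 1) * (\<alpha> + 2) * (\<alpha> + 3)))"
proof -
  define w where "w = (1 / K) powr (\<alpha> + 1)"
  have v: "1 - (sqrt (1 - 1 / K))\<^sup>2 = 1 / K"
    using assms(2) by (simp add: field_simps)
  have shift: "\<alpha> + 2 = (\<alpha> + 1) + 1" "\<alpha> + 3 = (\<alpha> + 1) + 2"
    by simp_all
  have "(1 / K) powr (\<alpha> + 2) = w * (1 / K)" "(1 / K) powr (\<alpha> + 3) = w * (1 / K)\<^sup>2"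
    using assms(2) unfolding w_def shift powr_add by (simp_all add: powr_numeral)
  then have "bump_primitive \<alpha> K (sqrt (1 - 1 / K))
      = - (w / (\<alpha> + 1) - 2 * K * (w * (1 / K)) / (\<alpha> + 2) + K\<^sup>2 * (w * (1 / K)\<^sup>2) / (\<alpha> + 3)) / 2"
    unfolding bump_primitive_def v w_def[symmetric] by simp
  also have "\<dots> = - (w / (\<alpha> + 1) - 2 * w / (\<alpha> + 2) + w / (\<alpha> + 3)) / 2"
    using assms(2) by (simp add: power2_eq_square)
  also have "\<dots> = - w / ((\<alpha> + 1) * (\<alpha> + 2) * (\<alpha> + 3))"
  proof -
    have "\<alpha> + 1 \<noteq> 0" "\<alpha> + 2 \<noteq> 0" "\<alpha> + 3 \<noteq> 0"
      using assms(1) by simp_all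
    then show ?thesis
      by (simp add: divide_simps) algebra
  qed
  finally show ?thesis
    by (simp add: w_def)
qed

lemma has_integral_bump:
  assumes "\<alpha> > -1" and "K \<ge> 1"
  shows "((\<lambda>t. t * (1 - t\<^sup>2) powr \<alpha> * (1 - K * (1 - t\<^sup>2))\<^sup>2) has_integral
           (1 / K) powr (\<alpha> + 1) / ((\<alpha> + 1) * (\<alpha> + 2) * (\<alpha> + 3))) {sqrt (1 - 1 / K)..1}"
proof -
  define x0 where "x0 = sqrt (1 - 1 / K)"
  have x0: "0 \<le> x0" "x0 < 1"
    using assms(2) by (simp_all add: x0_def real_sqrt_lt_1_iff)
  have "((\<lambda>t. t * (1 - t\<^sup>2) powr \<alpha> * (1 - K * (1 - t\<^sup>2))\<^sup>2) has_integral
      bump_primitive \<alpha> K 1 - bump_primitive \<alpha> K x0) {x0..1}"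
  proof (rule fundamental_theorem_of_calculus_interior)
    have "continuous_on {x0..1} (\<lambda>t. (1 - t\<^sup>2) powr (\<alpha> + k))" if "k \<in> {1, 2, 3}" for k
      using continuous_on_one_minus_square_powr[of "\<alpha> + k"] assms(1) that x0
      by (auto elim!: continuous_on_subset)
    then show "continuous_on {x0..1} (bump_primitive \<alpha> K)"
      unfolding bump_primitive_def[abs_def] using assms(1)
      by (intro continuous_on_divide continuous_on_minus continuous_on_add continuous_on_diff
          continuous_on_mult continuous_on_const) auto
    fix t assume "t \<in> {x0<..<1}"
    then show "(bump_primitive \<alpha> K has_vector_derivative t * (1 - t\<^sup>2) powr \<alpha> * (1 - K * (1 - t\<^sup>2))\<^sup>2) (at t)"
      using bump_primitive_has_derivative[of t \<alpha> K] assms(1) x0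
      by (simp add: has_real_derivative_iff_has_vector_derivative[symmetric])
  qed (use x0 in simp)
  then show ?thesis
    using bump_primitive_at_sqrt[OF assms] by (simp add: x0_def bump_primitive_def)
qed

lemma set_integral_sq_jweight_ge:
  assumes "\<alpha> > -1" "K \<ge> 1" "0 \<le> A"
    and low: "\<And>t. sqrt (1 - 1 / K) \<le> t \<Longrightarrow> t \<le> 1 \<Longrightarrow> A * (1 - K * (1 - t\<^sup>2)) \<le> f t"
    and int: "set_integrable lborel {-1..1} (\<lambda>t. (f t)\<^sup>2 * jweight \<alpha> t)"
  shows "A\<^sup>2 * ((1 / K) powr (\<alpha> + 1) / ((\<alpha> + 1) * (\<alpha> + 2) * (\<alpha> + 3)))
           \<le> (LINT t:{-1..1}|lborel. (f t)\<^sup>2 * jweight \<alpha> t)"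
proof -
  define x0 where "x0 = sqrt (1 - 1 / K)"
  have "0 \<le> 1 - 1 / K" "1 - 1 / K < 1"
    using assms(2) by (simp_all add: field_simps)
  then have x0: "0 \<le> x0" "x0 < 1" and "x0\<^sup>2 = 1 - 1 / K"
    by (simp_all add: x0_def real_sqrt_lt_1_iff)
  define g where "g t = A\<^sup>2 * (t * (1 - t\<^sup>2) powr \<alpha> * (1 - K * (1 - t\<^sup>2))\<^sup>2)" for t
  define h where "h = (\<lambda>t. (f t)\<^sup>2 * jweight \<alpha> t)"
  have g_int: "(g has_integral A\<^sup>2 * ((1 / K) powr (\<alpha> + 1) / ((\<alpha> + 1) * (\<alpha> + 2) * (\<alpha> + 3)))) {x0..1}"
    unfolding g_def x0_def by (intro has_integral_mult_right has_integral_bump assms(1,2))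
  have h_int: "h integrable_on {-1..1}" "integral {-1..1} h = (LINT t:{-1..1}|lborel. (f t)\<^sup>2 * jweight \<alpha> t)"
    using set_borel_integral_eq_integral[OF int] unfolding h_def by simp_all
  have "g t \<le> h t" if "x0 \<le> t" "t \<le> 1" for t
  proof -
    have "x0\<^sup>2 \<le> t\<^sup>2"
      using that x0 by (intro power_mono) auto
    then have "K * (1 - t\<^sup>2) \<le> 1"
      using \<open>x0\<^sup>2 = 1 - 1 / K\<close> assms(2) by (simp add: field_simps)
    then have "0 \<le> A * (1 - K * (1 - t\<^sup>2))"
      using assms(3) by simp
    then have "(A * (1 - K * (1 - t\<^sup>2)))\<^sup>2 \<le> (f t)\<^sup>2"
      using low[OF that[unfolded x0_def]] by (intro power_mono)
    have "g t = t * (1 - t\<^sup>2) powr \<alpha> * (A * (1 - K * (1 - t\<^sup>2)))\<^sup>2"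
      unfolding g_def by (simp only: power_mult_distrib mult_ac)
    also have "\<dots> \<le> 1 * (1 - t\<^sup>2) powr \<alpha> * (f t)\<^sup>2"
      using that x0 \<open>(A * (1 - K * (1 - t\<^sup>2)))\<^sup>2 \<le> (f t)\<^sup>2\<close> by (intro mult_mono) auto
    also have "\<dots> = h t"
      by (simp add: h_def jweight_def)
    finally show ?thesis .
  qed
  then have "integral {x0..1} g \<le> integral {x0..1} h"
    using g_int integrable_on_subinterval[OF h_int(1)] x0
    by (intro integral_le) (auto simp: has_integral_integrable)
  also have "\<dots> \<le> integral {-1..1} h"
    using h_int(1) integrable_on_subinterval[OF h_int(1)] x0
    by (intro integral_subset_le) (auto simp: h_def jweight_nonneg)
  finally show ?thesis
    using g_int h_int(2) by (simp add: integral_unique)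
qed

context prolate_ode
begin

text \<open>Integrating the self-adjoint form \<open>((1 - t\<^sup>2)\<^sup>\<alpha>\<^sup>+\<^sup>1 f')' = -(chi + c\<^sup>2t\<^sup>2)(1 - t\<^sup>2)\<^sup>\<alpha> f\<close>
  from \<open>s\<close> to \<open>1\<close>, where the flux vanishes.\<close>
lemma derivative_le_if_bounded_above:
  assumes le_A: "\<And>t. s \<le> t \<Longrightarrow> t \<le> 1 \<Longrightarrow> f t \<le> A" and "0 \<le> A" and s: "0 < s" "s < 1"
  shows "f' s \<le> A * (chi + c\<^sup>2) / (2 * (\<alpha> + 1) * s)"
proof -
  define B where "B = A * (chi + c\<^sup>2) / (2 * (\<alpha> + 1) * s)"
  define p where "p t = (1 - t\<^sup>2) powr (\<alpha> + 1)" for t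
  define m where "m t = B * p t - p t * f' t" for t
  have "m 1 \<le> m s"
  proof (rule DERIV_nonpos_imp_decreasing_open[of s 1 m])
    show "s \<le> 1"
      using s by simp
    have "continuous_on {s..1} (\<lambda>t. (1 - t\<^sup>2) powr (\<alpha> + 1))"
      using continuous_on_one_minus_square_powr[of "\<alpha> + 1"] alpha_gt s
      by (auto elim!: continuous_on_subset)
    then show "continuous_on {s..1} m"
      unfolding m_def p_def by (intro continuous_on_diff continuous_on_mult continuous_on_const continuous_on_f')
    fix t assume t: "s < t" "t < 1"
    then have "-1 < t"
      using s by simp
    have "(m has_real_derivative B * ((\<alpha> + 1) * (1 - t\<^sup>2) powr (\<alpha> + 1 - 1) * (- 2 * t))
        - (1 - t\<^sup>2) powr \<alpha> * (- ((chi + c\<^sup>2 * t\<^sup>2) * f t))) (at t)"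
      unfolding m_def p_def using \<open>-1 < t\<close> \<open>t < 1\<close>
      by (intro DERIV_diff DERIV_cmult has_real_derivative_one_minus_square_powr flux_has_derivative)
    moreover have "B * ((\<alpha> + 1) * (1 - t\<^sup>2) powr (\<alpha> + 1 - 1) * (- 2 * t))
        - (1 - t\<^sup>2) powr \<alpha> * (- ((chi + c\<^sup>2 * t\<^sup>2) * f t))
      = (1 - t\<^sup>2) powr \<alpha> * ((chi + c\<^sup>2 * t\<^sup>2) * f t - A * (chi + c\<^sup>2) * (t / s))"
      using alpha_gt s by (simp add: B_def divide_simps) (simp add: algebra_simps)
    moreover have "(chi + c\<^sup>2 * t\<^sup>2) * f t \<le> A * (chi + c\<^sup>2) * (t / s)"
    proof -
      have "t\<^sup>2 \<le> 1"
        using \<open>-1 < t\<close> \<open>t < 1\<close> by (simp add: abs_square_le_1)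
      have "(chi + c\<^sup>2 * t\<^sup>2) * f t \<le> (chi + c\<^sup>2 * t\<^sup>2) * A"
        using le_A[of t] t chi_pos by (intro mult_left_mono) auto
      also have "\<dots> \<le> (chi + c\<^sup>2) * A"
        using \<open>0 \<le> A\<close> \<open>t\<^sup>2 \<le> 1\<close> by (intro mult_right_mono) (auto simp: mult_left_le)
      also have "\<dots> \<le> (chi + c\<^sup>2) * A * (t / s)"
        using \<open>0 \<le> A\<close> chi_pos t s mult_left_mono[of 1 "t / s" "(chi + c\<^sup>2) * A"]
        by (simp add: add_pos_nonneg less_imp_le)
      finally show ?thesis
        by (simp add: mult_ac)
    qed
    ultimately show "\<exists>y. (m has_real_derivative y) (at t) \<and> y \<le> 0"
      by (intro exI conjI) (auto intro: mult_nonneg_nonpos)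
  qed
  moreover have "m 1 = 0"
    by (simp add: m_def p_def)
  moreover have "m s = p s * (B - f' s)" and "0 < p s"
    using one_minus_square_pos[of s] s by (simp_all add: m_def p_def algebra_simps)
  ultimately have "f' s \<le> B"
    by (simp add: zero_le_mult_iff)
  then show ?thesis
    unfolding B_def .
qed

lemma lower_bound_near_1:
  assumes le_f1: "\<And>t. x \<le> t \<Longrightarrow> t \<le> 1 \<Longrightarrow> f t \<le> f 1" and "0 \<le> f 1" and x: "0 < x" "x \<le> 1"
  shows "f 1 * (1 - (chi + c\<^sup>2) / (4 * (\<alpha> + 1)) * (1 - x\<^sup>2) / x\<^sup>2) \<le> f x"
proof -
  define K0 where "K0 = (chi + c\<^sup>2) / (4 * (\<alpha> + 1))"
  define B where "B = f 1 * K0"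
  have "B \<ge> 0"
    using \<open>0 \<le> f 1\<close> alpha_gt chi_pos by (simp add: B_def K0_def)
  define n where "n t = f t + B / t\<^sup>2" for t
  have "n 1 \<le> n x"
  proof (rule DERIV_nonpos_imp_decreasing_open[OF \<open>x \<le> 1\<close>])
    show "continuous_on {x..1} n"
      unfolding n_def using x by (intro continuous_intros continuous_on_f) auto
    fix t assume t: "x < t" "t < 1"
    have "(n has_real_derivative f' t - 2 * B / t ^ 3) (at t)"
      unfolding n_def using t x
      by (auto intro!: derivative_eq_intros has_deriv simp: field_simps power2_eq_square power3_eq_cube)
    moreover have "f' t \<le> 2 * B / t"
    proof -
      have "f' t \<le> f 1 * (chi + c\<^sup>2) / (2 * (\<alpha> + 1) * t)"
        using le_f1 t x \<open>0 \<le> f 1\<close> by (intro derivative_le_if_bounded_above) auto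
      also have "\<dots> = 2 * B / t"
        using alpha_gt t x by (simp add: B_def K0_def divide_simps)
      finally show ?thesis .
    qed
    moreover have "2 * B / t \<le> 2 * B / t ^ 3"
    proof (rule divide_left_mono)
      show "t ^ 3 \<le> t"
        using power_decreasing[of 1 3 t] t x by simp
    qed (use \<open>B \<ge> 0\<close> t x in auto)
    ultimately show "\<exists>y. (n has_real_derivative y) (at t) \<and> y \<le> 0"
      by (intro exI conjI) auto
  qed
  then have "f 1 + B \<le> f x + B / x\<^sup>2"
    by (simp add: n_def)
  moreover have "f 1 * (1 - K0 * (1 - x\<^sup>2) / x\<^sup>2) = f 1 - B * (1 - x\<^sup>2) / x\<^sup>2"
    by (simp add: B_def algebra_simps)
  moreover have "B * (1 - x\<^sup>2) / x\<^sup>2 = B / x\<^sup>2 - B"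
    using x by (simp add: field_simps)
  ultimately show ?thesis
    unfolding K0_def by linarith
qed

end

context prolate_ode_sonin
begin

lemma sq_at_1_le_if_nonneg:
  assumes "0 \<le> f 1" and int: "set_integrable lborel {-1..1} (\<lambda>t. (f t)\<^sup>2 * jweight \<alpha> t)"
  shows "(f 1)\<^sup>2 \<le> ((chi + c\<^sup>2) / (4 * (\<alpha> + 1)) + 1) powr (\<alpha> + 1) * ((\<alpha> + 1) * (\<alpha> + 2) * (\<alpha> + 3))
           * (LINT t:{-1..1}|lborel. (f t)\<^sup>2 * jweight \<alpha> t)"
proof -
  define K0 where "K0 = (chi + c\<^sup>2) / (4 * (\<alpha> + 1))"
  define K where "K = K0 + 1"
  have "K0 > 0"
    unfolding K0_def using chi_pos alpha_gt by (simp add: add_pos_nonneg)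
  then have "K > 1"
    by (simp add: K_def)
  have "f 1 * (1 - K * (1 - t\<^sup>2)) \<le> f t" if t: "sqrt (1 - 1 / K) \<le> t" "t \<le> 1" for t
  proof -
    have "0 < 1 - 1 / K"
      using \<open>K > 1\<close> by simp
    then have "0 < t"
      using t by (meson order_less_le_trans real_sqrt_gt_zero)
    have "1 - 1 / K \<le> t\<^sup>2"
      using t \<open>0 < 1 - 1 / K\<close> real_le_rsqrt by (metis less_imp_le real_sqrt_le_iff power_mono real_sqrt_ge_zero)
    then have "K0 \<le> K * t\<^sup>2"
      using \<open>K > 1\<close> by (simp add: K_def field_simps)
    then have "K0 * (1 - t\<^sup>2) \<le> K * t\<^sup>2 * (1 - t\<^sup>2)"
      using \<open>0 < t\<close> t by (intro mult_right_mono) (auto simp: abs_square_le_1)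
    then have "K0 * (1 - t\<^sup>2) / t\<^sup>2 \<le> K * (1 - t\<^sup>2)"
      using \<open>0 < t\<close> by (simp add: pos_divide_le_eq mult_ac)
    then have "f 1 * (1 - K * (1 - t\<^sup>2)) \<le> f 1 * (1 - K0 * (1 - t\<^sup>2) / t\<^sup>2)"
      using \<open>0 \<le> f 1\<close> by (intro mult_left_mono) auto
    also have "\<dots> \<le> f t"
      using lower_bound_near_1[of t] abs_le_abs_at_1 \<open>0 \<le> f 1\<close> \<open>0 < t\<close> t
      unfolding K0_def by (force simp: abs_le_iff)
    finally show ?thesis .
  qed
  then have "(f 1)\<^sup>2 * ((1 / K) powr (\<alpha> + 1) / ((\<alpha> + 1) * (\<alpha> + 2) * (\<alpha> + 3)))
      \<le> (LINT t:{-1..1}|lborel. (f t)\<^sup>2 * jweight \<alpha> t)"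
    using alpha_gt \<open>K > 1\<close> \<open>0 \<le> f 1\<close> int by (intro set_integral_sq_jweight_ge) auto
  moreover have "(1 / K) powr (\<alpha> + 1) = 1 / K powr (\<alpha> + 1)"
    using \<open>K > 1\<close> by (simp add: powr_divide)
  moreover have "0 < K powr (\<alpha> + 1) * ((\<alpha> + 1) * (\<alpha> + 2) * (\<alpha> + 3))"
    using \<open>K > 1\<close> alpha_gt by simp
  ultimately show ?thesis
    by (simp add: K_def K0_def pos_divide_le_eq mult_ac)
qed

lemma sq_at_1_le:
  assumes "set_integrable lborel {-1..1} (\<lambda>t. (f t)\<^sup>2 * jweight \<alpha> t)"
  shows "(f 1)\<^sup>2 \<le> ((chi + c\<^sup>2) / (4 * (\<alpha> + 1)) + 1) powr (\<alpha> + 1) * ((\<alpha> + 1) * (\<alpha> + 2) * (\<alpha> + 3))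
           * (LINT t:{-1..1}|lborel. (f t)\<^sup>2 * jweight \<alpha> t)"
proof (cases "0 \<le> f 1")
  case True
  then show ?thesis
    using assms by (rule sq_at_1_le_if_nonneg)
next
  case False
  interpret neg: prolate_ode_sonin "\<lambda>x. - f x" "\<lambda>x. - f' x" "\<lambda>x. - f'' x" \<alpha> chi c
    by (fact uminus_sonin)
  show ?thesis
    using neg.sq_at_1_le_if_nonneg False assms by simp
qed

end

section \<open>The numerical constant\<close>

lemma sq_le_two_powr: "0 \<le> y \<Longrightarrow> (1 + y / 3)\<^sup>2 \<le> (2::real) powr y"
proof -
  assume "0 \<le> y"
  then have "y * (2 / 3) \<le> y * ln 2"
    using ln2_ge_two_thirds by (intro mult_left_mono) auto
  then have "1 + y / 3 \<le> 1 + y / 2 * ln 2"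
    by simp
  also have "\<dots> \<le> exp (y / 2 * ln 2)"
    by (rule exp_ge_add_one_self)
  also have "\<dots> = 2 powr (y / 2)"
    by (simp add: powr_def)
  finally have "(1 + y / 3)\<^sup>2 \<le> (2 powr (y / 2))\<^sup>2"
    using \<open>0 \<le> y\<close> by (intro power_mono) auto
  also have "\<dots> = 2 powr y"
    by (simp add: power2_eq_square powr_add[symmetric])
  finally show ?thesis .
qed

lemma sonin_constant_le:
  fixes \<alpha> chi c q :: real
  assumes "\<alpha> > -1" and chi: "chi \<ge> 6 * (\<alpha> + 1) / (\<alpha> + 3)" and "c\<^sup>2 \<le> q * chi"
  shows "(chi + c\<^sup>2) / (4 * (\<alpha> + 1)) + 1 \<le> (3 * (1 + q) + 2 * (\<alpha> + 3)) / (12 * (\<alpha> + 1)) * chi"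
proof -
  have "1 \<le> (\<alpha> + 3) / (6 * (\<alpha> + 1)) * chi"
    using chi assms(1) by (simp add: field_simps)
  moreover have "chi + c\<^sup>2 \<le> (1 + q) * chi"
    using assms(3) by (simp add: algebra_simps)
  then have "(chi + c\<^sup>2) / (4 * (\<alpha> + 1)) \<le> (1 + q) * chi / (4 * (\<alpha> + 1))"
    using assms(1) by (intro divide_right_mono) auto
  ultimately have "(chi + c\<^sup>2) / (4 * (\<alpha> + 1)) + 1
      \<le> (1 + q) * chi / (4 * (\<alpha> + 1)) + (\<alpha> + 3) / (6 * (\<alpha> + 1)) * chi"
    by linarith
  also have "\<dots> = (3 * (1 + q) + 2 * (\<alpha> + 3)) / (12 * (\<alpha> + 1)) * chi"
    using assms(1) by (simp add: divide_simps) (simp add: algebra_simps)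
  finally show ?thesis .
qed

lemma rho_powr_le_9_if_nonpos:
  assumes "-1/2 < \<alpha>" "\<alpha> \<le> 0"
  shows "(4/3) powr (\<alpha> + 1) * ((\<alpha> + 2) * (\<alpha> + 3)) \<le> (9::real)"
proof -
  have "(4/3) powr (\<alpha> + 1) \<le> (4/3) powr 1"
    using assms by (intro powr_mono) auto
  moreover have "(\<alpha> + 2) * (\<alpha> + 3) \<le> 6"
    using assms mult_nonpos_nonneg[of \<alpha> "\<alpha> + 5"] by (simp add: algebra_simps)
  ultimately have "(4/3) powr (\<alpha> + 1) * ((\<alpha> + 2) * (\<alpha> + 3)) \<le> 4/3 * 6"
    using assms by (intro mult_mono) auto
  then show ?thesis
    by simp
qed

lemma rho_powr_le_9_if_le_three_halves:
  assumes "0 < \<alpha>" "\<alpha> \<le> 3/2"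
  shows "((\<alpha> + 6) / (6 * (\<alpha> + 1))) powr (\<alpha> + 1) * ((\<alpha> + 2) * (\<alpha> + 3)) \<le> (9::real)"
proof -
  define \<rho> where "\<rho> = (\<alpha> + 6) / (6 * (\<alpha> + 1))"
  have "0 < \<rho>" "\<rho> \<le> 1"
    using assms by (simp_all add: \<rho>_def field_simps)
  then have "\<rho> powr (\<alpha> + 1) \<le> \<rho> powr 1"
    using assms by (intro powr_mono') auto
  then have "\<rho> powr (\<alpha> + 1) * ((\<alpha> + 2) * (\<alpha> + 3)) \<le> \<rho> * ((\<alpha> + 2) * (\<alpha> + 3))"
    using \<open>0 < \<rho>\<close> assms by (intro mult_right_mono) auto
  also have "\<dots> \<le> 9"
  proof -
    have cubic: "a3 + 11 * a2 + 36 * a + 36 \<le> 54 * (a + 1)"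
      if "a3 \<le> 3/2 * a2" "a2 \<le> 3/2 * a" "a \<le> 3/2" for a a2 a3 :: real
      using that by (simp add: field_simps)
    have "\<alpha> * (\<alpha> * \<alpha>) \<le> 3/2 * (\<alpha> * \<alpha>)" and "\<alpha> * \<alpha> \<le> 3/2 * \<alpha>"
      using assms by (intro mult_right_mono; simp)+
    then have "(\<alpha> + 6) * ((\<alpha> + 2) * (\<alpha> + 3)) \<le> 54 * (\<alpha> + 1)"
      using cubic[of "\<alpha> * (\<alpha> * \<alpha>)" "\<alpha> * \<alpha>" \<alpha>] assms(2) by (simp add: algebra_simps)
    then show ?thesis
      using assms by (simp add: \<rho>_def field_simps)
  qed
  finally show ?thesis
    by (simp add: \<rho>_def)
qed

lemma rho_powr_le_9_if_gt_three_halves: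
  assumes "3/2 < \<alpha>"
  shows "((\<alpha> + 6) / (6 * (\<alpha> + 1))) powr (\<alpha> + 1) * ((\<alpha> + 2) * (\<alpha> + 3)) \<le> (9::real)"
proof -
  define \<rho> where "\<rho> = (\<alpha> + 6) / (6 * (\<alpha> + 1))"
  have "0 < \<rho>" "\<rho> \<le> 1/2"
    using assms by (simp_all add: \<rho>_def field_simps)
  then have "\<rho> powr (\<alpha> + 1) \<le> (1/2) powr (\<alpha> + 1)"
    using assms by (intro powr_mono2) auto
  also have "\<dots> = 1 / 2 powr (\<alpha> + 1)"
    by (simp add: powr_divide)
  finally have "\<rho> powr (\<alpha> + 1) \<le> 1 / 2 powr (\<alpha> + 1)" .
  moreover have "(\<alpha> + 2) * (\<alpha> + 3) \<le> 9 * 2 powr (\<alpha> + 1)"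
  proof -
    have "(\<alpha> + 2) * (\<alpha> + 3) \<le> 9 * (1 + (\<alpha> + 1) / 3)\<^sup>2"
      using assms by (simp add: power2_eq_square field_simps)
    also have "\<dots> \<le> 9 * 2 powr (\<alpha> + 1)"
      using sq_le_two_powr[of "\<alpha> + 1"] assms by simp
    finally show ?thesis .
  qed
  ultimately have "\<rho> powr (\<alpha> + 1) * ((\<alpha> + 2) * (\<alpha> + 3)) \<le> 1 / 2 powr (\<alpha> + 1) * (9 * 2 powr (\<alpha> + 1))"
    by (rule mult_mono) (use assms in simp_all)
  then show ?thesis
    by (simp add: \<rho>_def)
qed

text \<open>The source of the constant \<open>3\<close>: \<open>K = (chi + c\<^sup>2)/(4(\<alpha> + 1)) + 1 \<le> \<rho> chi\<close> with
  \<open>\<rho>\<^sup>\<alpha>\<^sup>+\<^sup>1(\<alpha> + 2)(\<alpha> + 3) \<le> 9\<close>, taking \<open>\<rho> = 4/3\<close> for \<open>\<alpha> \<le> 0\<close> and \<open>\<rho> = (\<alpha> + 6)/(6(\<alpha> + 1))\<close> for \<open>\<alpha> > 0\<close>.\<close>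
lemma sonin_constant_le_rho:
  fixes \<alpha> chi c :: real
  assumes "\<alpha> > -1/2" and "chi > 0" and chi: "chi \<ge> 6 * (\<alpha> + 1) / (\<alpha> + 3)"
    and q_nonpos: "\<alpha> \<le> 0 \<Longrightarrow> c\<^sup>2 / chi \<le> 1/2 + \<alpha>"
    and q_pos: "\<alpha> > 0 \<Longrightarrow> c\<^sup>2 / chi \<le> min 1 (1/2 + \<alpha>)"
  obtains \<rho> where "\<rho> > 0" and "(chi + c\<^sup>2) / (4 * (\<alpha> + 1)) + 1 \<le> \<rho> * chi"
    and "\<rho> powr (\<alpha> + 1) * ((\<alpha> + 2) * (\<alpha> + 3)) \<le> 9"
proof (cases "\<alpha> \<le> 0")
  case True
  then have "c\<^sup>2 \<le> (1/2 + \<alpha>) * chi"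
    using q_nonpos \<open>chi > 0\<close> by (simp add: pos_divide_le_eq)
  then have "(chi + c\<^sup>2) / (4 * (\<alpha> + 1)) + 1 \<le> (3 * (1 + (1/2 + \<alpha>)) + 2 * (\<alpha> + 3)) / (12 * (\<alpha> + 1)) * chi"
    using assms(1) chi by (intro sonin_constant_le) auto
  also have "\<dots> \<le> 4/3 * chi"
    using assms(1,2) by (intro mult_right_mono) (auto simp: field_simps)
  finally show thesis
    using assms(1) True by (intro that[of "4/3"] rho_powr_le_9_if_nonpos) auto
next
  case False
  then have "c\<^sup>2 \<le> 1 * chi"
    using q_pos \<open>chi > 0\<close> by (simp add: pos_divide_le_eq)
  then have "(chi + c\<^sup>2) / (4 * (\<alpha> + 1)) + 1 \<le> (3 * (1 + 1) + 2 * (\<alpha> + 3)) / (12 * (\<alpha> + 1)) * chi"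
    using assms(1) chi by (intro sonin_constant_le) auto
  also have "\<dots> = (\<alpha> + 6) / (6 * (\<alpha> + 1)) * chi"
    using assms(1) by (simp add: field_simps)
  moreover have "((\<alpha> + 6) / (6 * (\<alpha> + 1))) powr (\<alpha> + 1) * ((\<alpha> + 2) * (\<alpha> + 3)) \<le> 9"
  proof (cases "\<alpha> \<le> 3/2")
    case True
    with False show ?thesis
      by (intro rho_powr_le_9_if_le_three_halves) auto
  next
    case False
    then show ?thesis
      by (intro rho_powr_le_9_if_gt_three_halves) auto
  qed
  ultimately show thesis
    using assms(1) by (intro that[of "(\<alpha> + 6) / (6 * (\<alpha> + 1))"]) auto
qed

lemma abs_le_if_sq_le_sonin_constant:
  fixes \<alpha> chi c A :: real
  assumes "\<alpha> > -1/2" and "chi > 0" and "chi \<ge> 6 * (\<alpha> + 1) / (\<alpha> + 3)"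
    and "\<alpha> \<le> 0 \<Longrightarrow> c\<^sup>2 / chi \<le> 1/2 + \<alpha>"
    and "\<alpha> > 0 \<Longrightarrow> c\<^sup>2 / chi \<le> min 1 (1/2 + \<alpha>)"
    and A: "A\<^sup>2 \<le> ((chi + c\<^sup>2) / (4 * (\<alpha> + 1)) + 1) powr (\<alpha> + 1) * ((\<alpha> + 1) * (\<alpha> + 2) * (\<alpha> + 3))"
  shows "\<bar>A\<bar> \<le> 3 * sqrt (\<alpha> + 1) * chi powr ((\<alpha> + 1) / 2)"
proof -
  obtain \<rho> where "\<rho> > 0" and K: "(chi + c\<^sup>2) / (4 * (\<alpha> + 1)) + 1 \<le> \<rho> * chi"
    and \<rho>: "\<rho> powr (\<alpha> + 1) * ((\<alpha> + 2) * (\<alpha> + 3)) \<le> 9"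
    using sonin_constant_le_rho[OF assms(1-5)] .
  have "((chi + c\<^sup>2) / (4 * (\<alpha> + 1)) + 1) powr (\<alpha> + 1) \<le> (\<rho> * chi) powr (\<alpha> + 1)"
    using K assms(1,2) by (intro powr_mono2) (auto simp: add_nonneg_nonneg)
  then have "((chi + c\<^sup>2) / (4 * (\<alpha> + 1)) + 1) powr (\<alpha> + 1) * ((\<alpha> + 1) * (\<alpha> + 2) * (\<alpha> + 3))
      \<le> (\<rho> * chi) powr (\<alpha> + 1) * ((\<alpha> + 1) * (\<alpha> + 2) * (\<alpha> + 3))"
    using assms(1) by (intro mult_right_mono) auto
  with A have "A\<^sup>2 \<le> (\<rho> * chi) powr (\<alpha> + 1) * ((\<alpha> + 1) * (\<alpha> + 2) * (\<alpha> + 3))"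
    by (rule order_trans)
  also have "\<dots> = (\<rho> powr (\<alpha> + 1) * ((\<alpha> + 2) * (\<alpha> + 3))) * ((\<alpha> + 1) * chi powr (\<alpha> + 1))"
    using \<open>\<rho> > 0\<close> \<open>chi > 0\<close> by (simp add: powr_mult mult_ac)
  also have "\<dots> \<le> 9 * ((\<alpha> + 1) * chi powr (\<alpha> + 1))"
    using \<rho> assms(1) by (intro mult_right_mono) auto
  finally have "\<bar>A\<bar> \<le> sqrt (9 * ((\<alpha> + 1) * chi powr (\<alpha> + 1)))"
    using real_sqrt_le_mono by fastforce
  also have "\<dots> = 3 * sqrt (\<alpha> + 1) * chi powr ((\<alpha> + 1) / 2)"
    using \<open>chi > 0\<close> by (simp only: real_sqrt_mult) (simp add: powr_half_sqrt_powr)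
  finally show ?thesis .
qed

lemma sonin_condition:
  fixes \<alpha> chi c :: real
  assumes "\<alpha> > -1/2" and "chi > 0"
    and "\<alpha> \<le> 0 \<Longrightarrow> c\<^sup>2 / chi \<le> 1/2 + \<alpha>"
    and "\<alpha> > 0 \<Longrightarrow> c\<^sup>2 / chi \<le> min 1 (1/2 + \<alpha>)"
  shows "c\<^sup>2 \<le> (2 * \<alpha> + 1) * chi"
proof -
  have "c\<^sup>2 / chi \<le> 1/2 + \<alpha>"
    using assms(3,4) by (cases "\<alpha> \<le> 0") auto
  then have "c\<^sup>2 \<le> (1/2 + \<alpha>) * chi"
    using \<open>chi > 0\<close> by (simp add: pos_divide_le_eq)
  also have "\<dots> \<le> (2 * \<alpha> + 1) * chi"
    using assms(1,2) by (intro mult_right_mono) auto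
  finally show ?thesis .
qed

section \<open>Eigenfunctions of the integral operator\<close>

lemma Lop_sums:
  assumes "\<alpha> > -1" and "in_L2w \<alpha> \<phi>"
  shows "(\<lambda>k. c ^ k / fact k * (LINT y:{-1..1}|lborel. y ^ k * (\<phi> y * jweight \<alpha> y)) * x ^ k)
           sums Lop c \<alpha> \<phi> x"
  using sums_set_integral_exp_mult[OF set_integrable_mult_jweight[OF assms], of "c * x"]
  by (simp add: Lop_def power_mult_distrib mult_ac)

lemma eigenfun_eigenvalue_nonzero:
  assumes eig: "is_eigenfun c \<alpha> \<mu> \<phi>" and "c \<noteq> 0" "\<alpha> > -1"
    and cont: "continuous_on {-1<..<1} \<phi>"
  shows "\<mu> \<noteq> 0"
proof
  assume "\<mu> = 0"
  have L2: "in_L2w \<alpha> \<phi>" and pos: "normsq_w \<alpha> \<phi> > 0"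
    and eq: "\<And>x. x \<in> {-1..1} \<Longrightarrow> Lop c \<alpha> \<phi> x = \<mu> * \<phi> x"
    using eig by (auto simp: is_eigenfun_def)
  define m where "m k = (LINT y:{-1..1}|lborel. y ^ k * (\<phi> y * jweight \<alpha> y))" for k
  have "c ^ k / fact k * m k = 0" for k
  proof (rule powser_eq_0_on_interval_imp_coeff_eq_0)
    show "summable (\<lambda>k. c ^ k / fact k * m k * x ^ k)" for x
      using Lop_sums[OF \<open>\<alpha> > -1\<close> L2] unfolding m_def by (rule sums_summable)
    show "(\<Sum>k. c ^ k / fact k * m k * x ^ k) = 0" if "-1 < x" "x < 1" for x
      using Lop_sums[OF \<open>\<alpha> > -1\<close> L2, of c x] eq[of x] that \<open>\<mu> = 0\<close>
      unfolding m_def by (simp add: sums_iff)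
  qed
  then have moments: "m k = 0" for k
    using \<open>c \<noteq> 0\<close> by simp
  have product_eq_0: "\<phi> x * jweight \<alpha> x = 0" if "-1 < x" "x < 1" for x
    using set_integrable_mult_jweight[OF \<open>\<alpha> > -1\<close> L2] moments[unfolded m_def] _ that
    by (rule continuous_moments_eq_0_imp_eq_0) (intro continuous_on_mult cont continuous_on_jweight)
  then have phi_eq_0: "\<phi> x = 0" if "-1 < x" "x < 1" for x
    using product_eq_0[OF that] jweight_pos[OF that, of \<alpha>] by simp
  have "AE y in lborel. indicator {-1..1} y * ((\<phi> y)\<^sup>2 * jweight \<alpha> y) = 0"
    using AE_lborel_singleton[of "-1::real"] AE_lborel_singleton[of "1::real"]
    by eventually_elim (auto simp: indicator_def phi_eq_0)
  then have "normsq_w \<alpha> \<phi> = 0"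
    unfolding normsq_w_def set_lebesgue_integral_def by (simp add: integral_eq_zero_AE)
  with pos show False
    by simp
qed

lemma eigenfun_eq_powser:
  assumes eig: "is_eigenfun c \<alpha> \<mu> \<phi>" and "\<mu> \<noteq> 0" "\<alpha> > -1"
  obtains a where "\<And>y. summable (\<lambda>k. a k * y ^ k)"
    and "\<And>x. x \<in> {-1..1} \<Longrightarrow> \<phi> x = (\<Sum>k. a k * x ^ k)"
proof
  define a where "a k = c ^ k / fact k * (LINT y:{-1..1}|lborel. y ^ k * (\<phi> y * jweight \<alpha> y)) / \<mu>"
    for k
  have L2: "in_L2w \<alpha> \<phi>" and eq: "\<And>x. x \<in> {-1..1} \<Longrightarrow> Lop c \<alpha> \<phi> x = \<mu> * \<phi> x"
    using eig by (auto simp: is_eigenfun_def)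
  have sums: "(\<lambda>k. a k * x ^ k) sums (Lop c \<alpha> \<phi> x / \<mu>)" for x
    using sums_divide[OF Lop_sums[OF \<open>\<alpha> > -1\<close> L2, of c x], of \<mu>] by (simp add: a_def field_simps)
  then show "summable (\<lambda>k. a k * y ^ k)" for y
    by (rule sums_summable)
  show "\<phi> x = (\<Sum>k. a k * x ^ k)" if "x \<in> {-1..1}" for x
    using sums[of x] eq[OF that] \<open>\<mu> \<noteq> 0\<close> by (simp add: sums_iff)
qed

lemma in_L2w_eq_on_interval:
  assumes "in_L2w \<alpha> \<phi>" and eq: "\<And>x. x \<in> {-1..1} \<Longrightarrow> \<phi> x = f x"
  shows "set_integrable lborel {-1..1} (\<lambda>t. (f t)\<^sup>2 * jweight \<alpha> t)"
    and "(LINT t:{-1..1}|lborel. (f t)\<^sup>2 * jweight \<alpha> t) = normsq_w \<alpha> \<phi>"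
proof -
  have same: "(\<phi> t)\<^sup>2 * jweight \<alpha> t = (f t)\<^sup>2 * jweight \<alpha> t" if "t \<in> {-1..1}" for t
    using eq[OF that] by simp
  show "set_integrable lborel {-1..1} (\<lambda>t. (f t)\<^sup>2 * jweight \<alpha> t)"
    using assms(1) set_integrable_cong[of lborel lborel "{-1..1}" "{-1..1}"
        "\<lambda>t. (\<phi> t)\<^sup>2 * jweight \<alpha> t" "\<lambda>t. (f t)\<^sup>2 * jweight \<alpha> t"] same
    by (simp add: in_L2w_def)
  show "(LINT t:{-1..1}|lborel. (f t)\<^sup>2 * jweight \<alpha> t) = normsq_w \<alpha> \<phi>"
    unfolding normsq_w_def by (rule set_lebesgue_integral_cong) (simp_all add: same)
qed

lemma SL_eigenvalue_imp_ode:
  assumes SL: "SL_eigenvalue c \<alpha> \<phi> chi"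
    and eq: "\<And>x. -1 < x \<Longrightarrow> x < 1 \<Longrightarrow> \<phi> x = f x"
    and f': "\<And>x. (f has_real_derivative f' x) (at x)"
    and f'': "\<And>x. (f' has_real_derivative f'' x) (at x)"
    and x: "-1 < x" "x < 1"
  shows "(1 - x\<^sup>2) * f'' x - 2 * (\<alpha> + 1) * x * f' x + (chi + c\<^sup>2 * x\<^sup>2) * f x = 0"
proof -
  obtain dphi D where SL': "\<forall>x\<in>{-1<..<1}. (\<phi> has_real_derivative dphi x) (at x) \<and>
      ((\<lambda>t. jweight \<alpha> t * (1 - t\<^sup>2) * dphi t) has_real_derivative D x) (at x) \<and>
      - D x - c\<^sup>2 * x\<^sup>2 * jweight \<alpha> x * \<phi> x = chi * jweight \<alpha> x * \<phi> x"
    using SL unfolding SL_eigenvalue_def by (elim exE) (rule that)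
  have dphi: "dphi t = f' t" if "-1 < t" "t < 1" for t
  proof -
    have "(\<phi> has_real_derivative dphi t) (at t)"
      using bspec[OF SL', of t] that by simp
    then have "(f has_real_derivative dphi t) (at t)"
      by (rule has_field_derivative_transform_within_open[where S = "{-1<..<1}"]) (use that eq in auto)
    then show ?thesis
      using f' DERIV_unique by blast
  qed
  have "((\<lambda>t. (1 - t\<^sup>2) powr (\<alpha> + 1) * f' t) has_real_derivative D x) (at x)"
  proof (rule has_field_derivative_transform_within_open[where S = "{-1<..<1}"])
    show "((\<lambda>t. jweight \<alpha> t * (1 - t\<^sup>2) * dphi t) has_real_derivative D x) (at x)"
      using bspec[OF SL', of x] x by simp
    show "jweight \<alpha> t * (1 - t\<^sup>2) * dphi t = (1 - t\<^sup>2) powr (\<alpha> + 1) * f' t" if "t \<in> {-1<..<1}" for t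
      using that dphi[of t] one_minus_square_pos[of t] by (simp add: jweight_def powr_add)
  qed (use x in auto)
  then have "D x = (1 - x\<^sup>2) powr \<alpha> * ((1 - x\<^sup>2) * f'' x - 2 * (\<alpha> + 1) * x * f' x)"
    using has_real_derivative_flux[where g = f' and g' = f'', OF x f''] DERIV_unique by blast
  moreover have "- D x - c\<^sup>2 * x\<^sup>2 * jweight \<alpha> x * f x = chi * jweight \<alpha> x * f x"
    using bspec[OF SL', of x] x eq[OF x] by simp
  ultimately have "(1 - x\<^sup>2) powr \<alpha> * ((1 - x\<^sup>2) * f'' x - 2 * (\<alpha> + 1) * x * f' x + (chi + c\<^sup>2 * x\<^sup>2) * f x) = 0"
    by (simp add: jweight_def algebra_simps)
  then show ?thesis
    using one_minus_square_pos[OF x] by simp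
qed

lemma eigenfun_solves_prolate_ode:
  assumes eig: "is_eigenfun c \<alpha> \<mu> \<phi>" and SL: "SL_eigenvalue c \<alpha> \<phi> chi"
    and "c \<noteq> 0" "\<alpha> > -1" "chi > 0"
  obtains f f' f'' where "prolate_ode f f' f'' \<alpha> chi c" and "\<And>x. x \<in> {-1..1} \<Longrightarrow> \<phi> x = f x"
proof -
  obtain dphi D where SL': "\<forall>x\<in>{-1<..<1}. (\<phi> has_real_derivative dphi x) (at x) \<and>
      ((\<lambda>t. jweight \<alpha> t * (1 - t\<^sup>2) * dphi t) has_real_derivative D x) (at x) \<and>
      - D x - c\<^sup>2 * x\<^sup>2 * jweight \<alpha> x * \<phi> x = chi * jweight \<alpha> x * \<phi> x"
    using SL unfolding SL_eigenvalue_def by (elim exE) (rule that)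
  have "isCont \<phi> x" if "x \<in> {-1<..<1}" for x
    using bspec[OF SL' that] by (blast intro: DERIV_isCont)
  then have "continuous_on {-1<..<1} \<phi>"
    by (blast intro: continuous_at_imp_continuous_on)
  with eig assms(3,4) have "\<mu> \<noteq> 0"
    by (rule eigenfun_eigenvalue_nonzero)
  then obtain a where summable: "\<And>y. summable (\<lambda>k. a k * y ^ k)"
    and \<phi>_eq: "\<And>x. x \<in> {-1..1} \<Longrightarrow> \<phi> x = (\<Sum>k. a k * x ^ k)"
    using eigenfun_eq_powser[OF eig \<open>\<mu> \<noteq> 0\<close> assms(4)] by blast
  define f where "f x = (\<Sum>k. a k * x ^ k)" for x
  define f' where "f' x = (\<Sum>k. diffs a k * x ^ k)" for x
  define f'' where "f'' x = (\<Sum>k. diffs (diffs a) k * x ^ k)" for x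
  have f': "(f has_real_derivative f' x) (at x)" for x
    unfolding f_def[abs_def] f'_def using summable by (rule termdiffs_strong_converges_everywhere)
  have f'': "(f' has_real_derivative f'' x) (at x)" for x
    unfolding f'_def[abs_def] f''_def using termdiff_converges_all[OF summable]
    by (rule termdiffs_strong_converges_everywhere)
  have "prolate_ode f f' f'' \<alpha> chi c"
  proof
    fix x :: real assume "-1 < x" "x < 1"
    have "\<phi> y = f y" if "-1 < y" "y < 1" for y
      using \<phi>_eq[of y] that by (simp add: f_def)
    with SL show "(1 - x\<^sup>2) * f'' x - 2 * (\<alpha> + 1) * x * f' x + (chi + c\<^sup>2 * x\<^sup>2) * f x = 0"
      using f' f'' \<open>-1 < x\<close> \<open>x < 1\<close> by (rule SL_eigenvalue_imp_ode)
  qed (use f' f'' assms(4,5) in auto)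
  then show ?thesis
    using that \<phi>_eq by (auto simp: f_def)
qed

theorem theorem2:
  fixes c \<alpha> chi :: real and n :: nat and \<phi> :: "real \<Rightarrow> real"
  assumes "c > 0" and "\<alpha> > -1/2"
    and "is_phi c \<alpha> n \<phi>"
    and "SL_eigenvalue c \<alpha> \<phi> chi"
    and "chi \<ge> 6 * (\<alpha> + 1) / (\<alpha> + 3)"
    and "\<alpha> \<le> 0 \<Longrightarrow> c\<^sup>2 / chi \<le> 1/2 + \<alpha>"
    and "\<alpha> > 0 \<Longrightarrow> c\<^sup>2 / chi \<le> min 1 (1/2 + \<alpha>)"
  shows "(SUP t\<in>{-1..1}. \<bar>\<phi> t\<bar>) = \<bar>\<phi> 1\<bar> \<and>
         \<bar>\<phi> 1\<bar> \<le> 3 * sqrt (\<alpha> + 1) * chi powr ((\<alpha> + 1) / 2)"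
proof -
  have "0 < 6 * (\<alpha> + 1) / (\<alpha> + 3)"
    using assms(2) by simp
  with assms(5) have "chi > 0"
    by linarith
  obtain \<mu> where eig: "is_eigenfun c \<alpha> \<mu> \<phi>" and norm: "normsq_w \<alpha> \<phi> = 1"
    using assms(3) unfolding is_phi_def by blast
  obtain f f' f'' where "prolate_ode f f' f'' \<alpha> chi c" and \<phi>_eq: "\<And>x. x \<in> {-1..1} \<Longrightarrow> \<phi> x = f x"
    using eigenfun_solves_prolate_ode[OF eig assms(4)] assms(1,2) \<open>chi > 0\<close> by auto
  moreover have "c\<^sup>2 \<le> (2 * \<alpha> + 1) * chi"
    using assms(2) \<open>chi > 0\<close> assms(6,7) by (rule sonin_condition)
  ultimately interpret prolate_ode_sonin f f' f'' \<alpha> chi c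
    by (simp add: prolate_ode_sonin_def prolate_ode_sonin_axioms_def)
  have "in_L2w \<alpha> \<phi>"
    using eig by (simp add: is_eigenfun_def)
  then have "(f 1)\<^sup>2 \<le> ((chi + c\<^sup>2) / (4 * (\<alpha> + 1)) + 1) powr (\<alpha> + 1) * ((\<alpha> + 1) * (\<alpha> + 2) * (\<alpha> + 3))"
    using sq_at_1_le in_L2w_eq_on_interval[OF _ \<phi>_eq] norm by simp
  then have "\<bar>\<phi> 1\<bar> \<le> 3 * sqrt (\<alpha> + 1) * chi powr ((\<alpha> + 1) / 2)"
    using abs_le_if_sq_le_sonin_constant[OF assms(2) \<open>chi > 0\<close> assms(5-7)] \<phi>_eq[of 1] by simp
  moreover have "(SUP t\<in>{-1..1}. \<bar>\<phi> t\<bar>) = \<bar>\<phi> 1\<bar>"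
    using abs_le_abs_at_1 \<phi>_eq by (intro cSup_eq_maximum) auto
  ultimately show ?thesis
    by blast
qed

end
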